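(* Let $\Sigma_1\subseteq (N_1)_\mathbb{R}$ and $\Sigma_2\subseteq(N_2)_\mathbb{R}$ be Ehrhart fans. Then the product fan $\Sigma_1\times\Sigma_2$ in $(N_1\oplus N_2)_\mathbb{R}$ is Ehrhart, and its Ehrhart polynomial is given by \[ \chi_{\Sigma_1\times\Sigma_2}([f_1\times f_2])=\chi_{\Sigma_1}([f_1])\cdot\chi_{\Sigma_2}([f_2]) \] for $f_1\in\mathrm{PL}(\Sigma_1)$, $f_2\in\mathrm{PL}(\Sigma_2)$, where $(f_1\times f_2)(x_1,x_2)=f_1(x_1)+f_2(x_2)$.
   Context: A fan is unimodular if it contains the origin and for each cone the primitive ray generators $u_\rho$ extend to a $\mathbb{Z}$-basis of the lattice. For a lattice $N$ with dual $M=\mathrm{Hom}(N,\mathbb{Z})$ viewed as integral linear functions, $\mathrm{PL}(\Sigma)$ is the group of functions on $|\Sigma|$ agreeing on each cone with some element of $M$ (for unimodular $\Sigma$ every element of $\mathrm{PL}(\Sigma_1\times\Sigma_2)$ is of the form $f_1\times f_2$), $\underline{\mathrm{PL}}(\Sigma)$ its quotient by restrictions of elements of $M$, $\delta_\rho$ the Courant function ($1$ at $u_\rho$, $0$ at other ray generators), $\Sigma^\sigma$ the star fan (image in $N_\mathbb{R}/\mathrm{span}(\sigma)$, lattice $N/\mathrm{Span}_\mathbb{Z}(\sigma\cap N)$, of all faces of cones containing $\sigma$) and $[f]^\sigma$ the class of the function induced by $f-m$, $m\in M$ agreeing with $f$ on $\sigma$. A unimodular fan $\Sigma$ is Ehrhart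 (recursively on dimension) if (1) $\Sigma^\rho$ is Ehrhart for every ray $\rho$, and (2) there is $\chi_\Sigma:\underline{\mathrm{PL}}(\Sigma)\to\mathbb{Z}$ with $\chi_\Sigma(0)=1$ and $\chi_\Sigma([f])=\chi_\Sigma([f-\delta_\rho])+\chi_{\Sigma^\rho}([f]^\rho)$ for all $f\in\mathrm{PL}(\Sigma)$, $\rho\in\Sigma(1)$. Zero-dimensional fans are Ehrhart with $\chi=1$; such $\chi_\Sigma$ is unique (the Ehrhart polynomial). *)

theory Defs
  imports "HOL-Analysis.Analysis"
begin

text \<open>Lattices are modelled as subgroups N of a Euclidean space 'a that have a
  Z-basis consisting of R-linearly independent vectors; N_R is span N.\<close>

definition int_span :: "'a::real_vector set \<Rightarrow> 'a set" where
  "int_span B = {(\<Sum>b\<in>B. of_int (c b) *\<^sub>R b) | c. True}"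

definition zbasis :: "'a::euclidean_space set \<Rightarrow> 'a set \<Rightarrow> bool" where
  "zbasis N B \<longleftrightarrow> finite B \<and> independent B \<and> N = int_span B"

definition is_lattice :: "'a::euclidean_space set \<Rightarrow> bool" where
  "is_lattice N \<longleftrightarrow> (\<exists>B. zbasis N B)"

text \<open>M = Hom(N,Z), viewed as integral linear functions.\<close>
definition intlin :: "'a::euclidean_space set \<Rightarrow> ('a \<Rightarrow> real) set" where
  "intlin N = {m. linear m \<and> (\<forall>x\<in>N. m x \<in> \<int>)}"

definition pos_hull :: "'a::real_vector set \<Rightarrow> 'a set" where
  "pos_hull G = {(\<Sum>g\<in>G. c g *\<^sub>R g) | c. \<forall>g. 0 \<le> c g}"

definition rat_cone :: "'a::euclidean_space set \<Rightarrow> 'a set \<Rightarrow> bool" where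
  "rat_cone N \<sigma> \<longleftrightarrow> (\<exists>G. finite G \<and> G \<subseteq> N \<and> \<sigma> = pos_hull G)
     \<and> (\<forall>x. x \<in> \<sigma> \<and> - x \<in> \<sigma> \<longrightarrow> x = 0)"

definition is_fan :: "'a::euclidean_space set \<Rightarrow> 'a set set \<Rightarrow> bool" where
  "is_fan N S \<longleftrightarrow> finite S \<and> S \<noteq> {} \<and> (\<forall>\<sigma>\<in>S. rat_cone N \<sigma>)
     \<and> (\<forall>\<sigma>\<in>S. \<forall>\<tau>. \<tau> face_of \<sigma> \<and> \<tau> \<noteq> {} \<longrightarrow> \<tau> \<in> S)
     \<and> (\<forall>\<sigma>\<in>S. \<forall>\<tau>\<in>S. (\<sigma> \<inter> \<tau>) face_of \<sigma> \<and> (\<sigma> \<inter> \<tau>) face_of \<tau>)"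

definition rays :: "'a::euclidean_space set set \<Rightarrow> 'a set set" where
  "rays S = {\<rho>\<in>S. dim \<rho> = 1}"

definition prim_gen :: "'a::euclidean_space set \<Rightarrow> 'a set \<Rightarrow> 'a" where
  "prim_gen N \<rho> = (THE u. u \<in> \<rho> \<inter> N \<and> u \<noteq> 0 \<and>
      (\<forall>v\<in>\<rho> \<inter> N. \<exists>k::nat. v = real k *\<^sub>R u))"

definition unimodular_fan :: "'a::euclidean_space set \<Rightarrow> 'a set set \<Rightarrow> bool" where
  "unimodular_fan N S \<longleftrightarrow> is_lattice N \<and> is_fan N S \<and>
     (\<forall>\<sigma>\<in>S. \<exists>B. zbasis N B \<and> prim_gen N ` {\<rho>\<in>rays S. \<rho> \<subseteq> \<sigma>} \<subseteq> B)"

text \<open>PL(Sigma): functions agreeing on each cone with an element of M. Values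
  outside the support are irrelevant (all constructions below only look at the
  support).\<close>
definition PL :: "'a::euclidean_space set \<Rightarrow> 'a set set \<Rightarrow> ('a \<Rightarrow> real) set" where
  "PL N S = {f. \<forall>\<sigma>\<in>S. \<exists>m\<in>intlin N. \<forall>x\<in>\<sigma>. f x = m x}"

definition courant :: "'a::euclidean_space set \<Rightarrow> 'a set set \<Rightarrow> 'a set \<Rightarrow> ('a \<Rightarrow> real)" where
  "courant N S \<rho> = (SOME g. g \<in> PL N S \<and> g (prim_gen N \<rho>) = 1 \<and>
      (\<forall>\<rho>'\<in>rays S. \<rho>' \<noteq> \<rho> \<longrightarrow> g (prim_gen N \<rho>') = 0))"

text \<open>The quotient N_R / span sigma is modelled by the orthogonal complement of
  span sigma, via the orthogonal projection; the quotient lattice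
  N / Span_Z(sigma \<inter> N) is then the projection of N.\<close>
definition perp_proj :: "'a::euclidean_space set \<Rightarrow> 'a \<Rightarrow> 'a" where
  "perp_proj A x = (THE y. x - y \<in> span A \<and> (\<forall>a\<in>A. inner a y = 0))"

definition star_lattice :: "'a::euclidean_space set \<Rightarrow> 'a set \<Rightarrow> 'a set" where
  "star_lattice N \<sigma> = perp_proj \<sigma> ` N"

definition star_fan :: "'a::euclidean_space set set \<Rightarrow> 'a set \<Rightarrow> 'a set set" where
  "star_fan S \<sigma> = {perp_proj \<sigma> ` \<tau> | \<tau>. \<exists>\<tau>'\<in>S. \<sigma> \<subseteq> \<tau>' \<and> \<tau> face_of \<tau>' \<and> \<tau> \<noteq> {}}"

text \<open>[f]^sigma: the function induced on the star fan by f - m, m \<in> M agreeing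
  with f on sigma.\<close>
definition star_fun :: "'a::euclidean_space set \<Rightarrow> 'a set set \<Rightarrow> 'a set \<Rightarrow> ('a \<Rightarrow> real) \<Rightarrow> ('a \<Rightarrow> real)" where
  "star_fun N S \<sigma> f =
     (let m = (SOME m. m \<in> intlin N \<and> (\<forall>x\<in>\<sigma>. f x = m x))
      in (\<lambda>y. SOME v. \<exists>\<tau>\<in>S. \<sigma> \<subseteq> \<tau> \<and> (\<exists>x\<in>\<tau>. perp_proj \<sigma> x = y \<and> v = f x - m x)))"

text \<open>ehr_chi N S chi: S is an Ehrhart fan (w.r.t. lattice N) and chi is its
  Ehrhart polynomial, viewed as a function on PL(S) that is constant on classes
  modulo M (and independent of values off the support).\<close>
inductive ehr_chi :: "'a::euclidean_space set \<Rightarrow> 'a set set \<Rightarrow> (('a \<Rightarrow> real) \<Rightarrow> int) \<Rightarrow> bool" where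
  "\<lbrakk> unimodular_fan N S;
     \<forall>f\<in>PL N S. \<forall>g\<in>PL N S. (\<exists>m\<in>intlin N. \<forall>x\<in>\<Union>S. f x = g x + m x) \<longrightarrow> chi f = chi g;
     chi (\<lambda>x. 0) = 1;
     \<forall>\<rho>\<in>rays S. \<exists>chir. ehr_chi (star_lattice N \<rho>) (star_fan S \<rho>) chir \<and>
        (\<forall>f\<in>PL N S. chi f = chi (\<lambda>x. f x - courant N S \<rho> x) + chir (star_fun N S \<rho> f)) \<rbrakk>
   \<Longrightarrow> ehr_chi N S chi"

definition ehrhart :: "'a::euclidean_space set \<Rightarrow> 'a set set \<Rightarrow> bool" where
  "ehrhart N S \<longleftrightarrow> (\<exists>chi. ehr_chi N S chi)"

definition prod_fan :: "'a set set \<Rightarrow> 'b set set \<Rightarrow> ('a \<times> 'b) set set" where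
  "prod_fan S1 S2 = {\<sigma>1 \<times> \<sigma>2 | \<sigma>1 \<sigma>2. \<sigma>1 \<in> S1 \<and> \<sigma>2 \<in> S2}"

end

(*
  The Ehrhart polynomial of the product fan is chi f = chi1 (f(-,0)) * chi2 (f(0,-)).
  A PL function on the product agrees on the support with f(x,0) + f(0,y), and the rays of the
  product are the rays rho1 x 0 and 0 x rho2.  At rho1 x 0 the Courant function restricts to
  the Courant function of rho1 on the first factor and to 0 on the second, while the star fan of
  a product cone sigma1 x sigma2 is the product of the two star fans (using Sigma^{0} = Sigma),
  the induced functions agreeing modulo M.  So the defining recursion of chi at rho1 x 0 is the
  recursion of chi1 at rho1 multiplied by chi2 (f(0,-)), symmetrically at 0 x rho2, and an
  induction over both fans shows that the product is Ehrhart with this chi.  Any other Ehrhart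
  polynomial coincides with it, because every PL function on a unimodular fan is, modulo M, an
  integral combination of Courant functions.  Finally f1 x f2 restricts to f1 and f2 since PL
  functions vanish at the origin.
*)

theory Submission
  imports Defs
begin

section \<open>Cones\<close>

lemma pos_hullI: "x = (\<Sum>g\<in>G. c g *\<^sub>R g) \<Longrightarrow> (\<And>g. 0 \<le> c g) \<Longrightarrow> x \<in> pos_hull G"
  unfolding pos_hull_def by blast

lemma pos_hullE:
  assumes "x \<in> pos_hull G"
  obtains c where "x = (\<Sum>g\<in>G. c g *\<^sub>R g)" "\<forall>g. 0 \<le> c g"
  using assms unfolding pos_hull_def by blast

lemma convex_cone_pos_hull: "convex_cone (pos_hull G)"
  unfolding convex_cone_iff
proof (intro conjI ballI allI impI)
  show "0 \<in> pos_hull G"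
    by (rule pos_hullI[where c = "\<lambda>_. 0"]) simp_all
next
  fix x y assume "x \<in> pos_hull G" "y \<in> pos_hull G"
  obtain c where "x = (\<Sum>g\<in>G. c g *\<^sub>R g)" "\<forall>g. 0 \<le> c g"
    using \<open>x \<in> pos_hull G\<close> by (rule pos_hullE)
  moreover obtain d where "y = (\<Sum>g\<in>G. d g *\<^sub>R g)" "\<forall>g. 0 \<le> d g"
    using \<open>y \<in> pos_hull G\<close> by (rule pos_hullE)
  ultimately show "x + y \<in> pos_hull G"
    by (intro pos_hullI[where c = "\<lambda>g. c g + d g"]) (simp_all add: scaleR_add_left sum.distrib)
next
  fix x and t :: real assume "x \<in> pos_hull G" "0 \<le> t"
  obtain c where "x = (\<Sum>g\<in>G. c g *\<^sub>R g)" "\<forall>g. 0 \<le> c g"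
    using \<open>x \<in> pos_hull G\<close> by (rule pos_hullE)
  with \<open>0 \<le> t\<close> show "t *\<^sub>R x \<in> pos_hull G"
    by (intro pos_hullI[where c = "\<lambda>g. t * c g"]) (simp_all add: scaleR_sum_right)
qed

lemma pos_hull_eq_convex_cone_hull:
  assumes "finite G"
  shows "pos_hull G = convex_cone hull G"
proof
  show "convex_cone hull G \<subseteq> pos_hull G"
  proof (rule hull_minimal)
    show "G \<subseteq> pos_hull G"
    proof
      fix g assume "g \<in> G"
      have "(\<Sum>h\<in>G. (if h = g then 1 else 0) *\<^sub>R h) = (\<Sum>h\<in>G. if h = g then h else 0)"
        by (rule sum.cong) auto
      with \<open>g \<in> G\<close> assms have "g = (\<Sum>h\<in>G. (if h = g then 1 else 0) *\<^sub>R h)"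
        by simp
      then show "g \<in> pos_hull G"
        by (rule pos_hullI) simp
    qed
  qed (rule convex_cone_pos_hull)
  have sum_mem: "(\<Sum>g\<in>H. c g *\<^sub>R g) \<in> convex_cone hull G"
    if "H \<subseteq> G" "\<forall>g. 0 \<le> c g" for H c
    using finite_subset[OF that(1) assms] that(1)
  proof (induction H rule: finite_induct)
    case (insert h H)
    then have "c h *\<^sub>R h \<in> convex_cone hull G"
      using that(2) by (simp add: convex_cone_hull_mul hull_inc)
    then show ?case
      using insert by (simp add: convex_cone_hull_add)
  qed (simp add: convex_cone_hull_contains_0)
  show "pos_hull G \<subseteq> convex_cone hull G"
  proof
    fix x assume "x \<in> pos_hull G"
    then obtain c where "x = (\<Sum>g\<in>G. c g *\<^sub>R g)" "\<forall>g. 0 \<le> c g"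
      by (rule pos_hullE)
    then show "x \<in> convex_cone hull G"
      using sum_mem[of G c] by simp
  qed
qed

lemma pos_hull_subset_span: "pos_hull G \<subseteq> span G"
proof
  fix x assume "x \<in> pos_hull G"
  then obtain c where "x = (\<Sum>g\<in>G. c g *\<^sub>R g)"
    by (rule pos_hullE)
  then show "x \<in> span G"
    by (simp add: span_sum span_scale span_base)
qed

lemma pos_hull_decompose:
  assumes "finite G" "g \<in> G" "x \<in> pos_hull G"
  obtains a x' where "0 \<le> a" "x' \<in> pos_hull (G - {g})" "x = a *\<^sub>R g + x'"
proof -
  obtain c where c: "x = (\<Sum>g\<in>G. c g *\<^sub>R g)" "\<forall>g. 0 \<le> c g"
    using assms(3) by (rule pos_hullE)
  have "x = c g *\<^sub>R g + (\<Sum>h\<in>G - {g}. c h *\<^sub>R h)"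
    using c(1) assms(1,2) by (simp add: sum.remove)
  moreover have "(\<Sum>h\<in>G - {g}. c h *\<^sub>R h) \<in> pos_hull (G - {g})"
    using c(2) by (intro pos_hullI[OF refl]) simp
  ultimately show thesis
    using that c(2) by blast
qed

lemma pos_hull_minimal_generators:
  assumes "finite G0"
  obtains G where "G \<subseteq> G0" "pos_hull G = pos_hull G0" "\<And>g. g \<in> G \<Longrightarrow> g \<notin> pos_hull (G - {g})"
proof -
  define P where "P G \<longleftrightarrow> G \<subseteq> G0 \<and> pos_hull G = pos_hull G0" for G
  obtain G where PG: "P G" and least: "\<And>G'. P G' \<Longrightarrow> card G \<le> card G'"
    using ex_has_least_nat[of P G0 card] unfolding P_def by blast
  have fin: "finite G"
    using PG assms unfolding P_def by (blast intro: finite_subset)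
  have "g \<notin> pos_hull (G - {g})" if "g \<in> G" for g
  proof
    assume "g \<in> pos_hull (G - {g})"
    then have "convex_cone hull G = convex_cone hull (G - {g})"
      using fin hull_redundant[of g convex_cone "G - {g}"] insert_Diff[OF that]
      by (simp add: pos_hull_eq_convex_cone_hull)
    then have "P (G - {g})"
      using PG that fin unfolding P_def by (auto simp: pos_hull_eq_convex_cone_hull insert_absorb)
    then show False
      using least[of "G - {g}"] card_Diff1_less[OF fin that] by simp
  qed
  then show thesis
    using that PG unfolding P_def by blast
qed

lemma rat_coneE:
  assumes "rat_cone N \<sigma>"
  obtains G where "finite G" "G \<subseteq> N" "\<sigma> = pos_hull G"
  using assms unfolding rat_cone_def by blast

lemma rat_cone_convex_cone: "rat_cone N \<sigma> \<Longrightarrow> convex_cone \<sigma>"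
  by (metis rat_coneE convex_cone_pos_hull)

lemma rat_cone_convex: "rat_cone N \<sigma> \<Longrightarrow> convex \<sigma>"
  using rat_cone_convex_cone unfolding convex_cone_def by blast

lemma rat_cone_pointed:
  assumes "rat_cone N \<sigma>" "x \<in> \<sigma>" "y \<in> \<sigma>" "x + y = 0"
  shows "x = 0"
proof -
  have "y = - x"
    using assms(4) by (simp add: add_eq_0_iff)
  then show ?thesis
    using assms(1-3) unfolding rat_cone_def by blast
qed

lemma mem_conic_hull_singleton: "x \<in> conic hull {g} \<longleftrightarrow> (\<exists>t\<ge>0. x = t *\<^sub>R g)"
  by (auto simp: conic_hull_explicit)

lemma dim_conic_hull_singleton:
  fixes g :: "'a::euclidean_space"
  assumes "g \<noteq> 0"
  shows "dim (conic hull {g}) = 1"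
proof -
  have "conic hull {g} \<subseteq> span {g}"
  proof
    fix x assume "x \<in> conic hull {g}"
    then obtain t where "x = t *\<^sub>R g"
      by (auto simp: mem_conic_hull_singleton)
    then show "x \<in> span {g}"
      by (simp add: span_base span_scale)
  qed
  then have "span (conic hull {g}) = span {g}"
    by (intro subset_antisym span_minimal[OF _ subspace_span] span_mono[OF hull_subset])
  then have "dim (conic hull {g}) = dim {g}"
    by (metis dim_span)
  then show ?thesis
    using assms by simp
qed

lemma conic_hull_generator_summand:
  assumes fin: "finite G" and g: "g \<in> G" "g \<notin> pos_hull (G - {g})"
    and pointed: "\<forall>x\<in>pos_hull G. \<forall>y\<in>pos_hull G. x + y = 0 \<longrightarrow> x = 0"
    and ab: "a \<in> pos_hull G" "b \<in> pos_hull G" "a + b \<in> conic hull {g}"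
  shows "a \<in> conic hull {g}"
proof -
  let ?C = "pos_hull G" and ?C' = "pos_hull (G - {g})"
  have C'C: "?C' \<subseteq> ?C" and gC: "g \<in> ?C"
    using fin g(1) by (simp_all add: pos_hull_eq_convex_cone_hull hull_mono hull_inc)
  obtain \<alpha> a' where a': "0 \<le> \<alpha>" "a' \<in> ?C'" "a = \<alpha> *\<^sub>R g + a'"
    using pos_hull_decompose[OF fin g(1) ab(1)] .
  obtain \<beta> b' where b': "b' \<in> ?C'" "b = \<beta> *\<^sub>R g + b'"
    using pos_hull_decompose[OF fin g(1) ab(2)] by metis
  obtain s where "a + b = s *\<^sub>R g"
    using ab(3) by (auto simp: mem_conic_hull_singleton)
  define r where "r = s - \<alpha> - \<beta>"
  have r: "a' + b' = r *\<^sub>R g"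
    using \<open>a + b = s *\<^sub>R g\<close> a'(3) b'(2) unfolding r_def by (simp add: algebra_simps)
  have a'b': "a' + b' \<in> ?C'"
    using convex_cone_pos_hull a'(2) b'(1) by (rule convex_cone_add)
  have "\<not> 0 < r"
  proof
    assume "0 < r"
    then have "g = (1 / r) *\<^sub>R (a' + b')"
      using r by simp
    then show False
      using g(2) convex_cone_scaleR[OF convex_cone_pos_hull _ a'b', of "1 / r"] \<open>0 < r\<close> by simp
  qed
  then have "(- r) *\<^sub>R g \<in> ?C"
    using convex_cone_scaleR[OF convex_cone_pos_hull _ gC, of "- r"] by linarith
  moreover have "(a' + b') + (- r) *\<^sub>R g = 0"
    using r by simp
  ultimately have "a' + b' = 0"
    using pointed a'b' C'C by blast
  then have "a' = 0"
    using pointed a'(2) b'(1) C'C by blast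
  then show ?thesis
    using a'(1,3) by (auto simp: mem_conic_hull_singleton)
qed

lemma conic_hull_generator_face_of_pos_hull:
  assumes fin: "finite G" and g: "g \<in> G" "g \<notin> pos_hull (G - {g})"
    and pointed: "\<forall>x\<in>pos_hull G. \<forall>y\<in>pos_hull G. x + y = 0 \<longrightarrow> x = 0"
  shows "conic hull {g} face_of pos_hull G"
  unfolding face_of_def
proof (intro conjI ballI impI)
  let ?C = "pos_hull G"
  have gC: "g \<in> ?C"
    using fin g(1) by (simp add: pos_hull_eq_convex_cone_hull hull_inc)
  then show "conic hull {g} \<subseteq> ?C"
    using convex_cone_scaleR[OF convex_cone_pos_hull _ gC] by (auto simp: mem_conic_hull_singleton)
  show "convex (conic hull {g})"
    by (simp add: convex_conic_hull)
  fix a b x assume ab: "a \<in> ?C" "b \<in> ?C" and x: "x \<in> conic hull {g}" "x \<in> open_segment a b"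
  then obtain u where u: "0 < u" "u < 1" "x = (1 - u) *\<^sub>R a + u *\<^sub>R b"
    by (auto simp: in_segment)
  have ua: "(1 - u) *\<^sub>R a \<in> ?C" and ub: "u *\<^sub>R b \<in> ?C"
    using u ab by (auto intro: convex_cone_scaleR[OF convex_cone_pos_hull])
  have scale: "y \<in> conic hull {g}" if "t *\<^sub>R y \<in> conic hull {g}" "0 < t" for y t
    using conic_mul[OF conic_conic_hull that(1), of "1 / t"] that(2) by simp
  note summand = conic_hull_generator_summand[OF fin g pointed]
  show "a \<in> conic hull {g}"
    using scale[OF summand[OF ua ub]] x(1) u by simp
  show "b \<in> conic hull {g}"
    using scale[OF summand[OF ub ua]] x(1) u by (simp add: add.commute)
qed

lemma span_convex_cone_diff:
  assumes C: "convex_cone C" and x: "x \<in> span C"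
  obtains a b where "a \<in> C" "b \<in> C" "x = a - b"
proof -
  let ?D = "\<Union>a\<in>C. \<Union>b\<in>uminus ` C. {a + b}"
  have "convex_cone ?D"
    using convex_cone_sums[OF C convex_cone_negations[OF C]] .
  moreover have "\<forall>y\<in>?D. - y \<in> ?D"
    by (force simp: add.commute)
  ultimately have "subspace ?D"
    by (simp add: subspace_convex_cone_symmetric)
  moreover have "C \<subseteq> ?D"
    using convex_cone_contains_0[OF C] by force
  ultimately have "span C \<subseteq> ?D"
    by (rule span_minimal[rotated])
  then show thesis
    using x that by fastforce
qed

section \<open>Lattices and primitive generators\<close>

lemma int_spanI: "x = (\<Sum>b\<in>B. of_int (c b) *\<^sub>R b) \<Longrightarrow> x \<in> int_span B"
  unfolding int_span_def by blast

lemma int_spanE: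
  assumes "x \<in> int_span B"
  obtains c where "x = (\<Sum>b\<in>B. of_int (c b) *\<^sub>R b)"
  using assms unfolding int_span_def by blast

lemma int_span_zero: "0 \<in> int_span B"
  by (rule int_spanI[where c = "\<lambda>_. 0"]) simp

lemma int_span_diff:
  assumes "x \<in> int_span B" "y \<in> int_span B"
  shows "x - y \<in> int_span B"
proof -
  obtain c d where "x = (\<Sum>b\<in>B. of_int (c b) *\<^sub>R b)" "y = (\<Sum>b\<in>B. of_int (d b) *\<^sub>R b)"
    using assms by (metis int_spanE)
  then show ?thesis
    by (intro int_spanI[where c = "\<lambda>b. c b - d b"]) (simp add: scaleR_diff_left sum_subtractf)
qed

lemma int_span_int_scale:
  assumes "x \<in> int_span B"
  shows "of_int k *\<^sub>R x \<in> int_span B"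
proof -
  obtain c where "x = (\<Sum>b\<in>B. of_int (c b) *\<^sub>R b)"
    using assms by (rule int_spanE)
  then show ?thesis
    by (intro int_spanI[where c = "\<lambda>b. k * c b"]) (simp add: scaleR_sum_right)
qed

lemma int_span_coeffs_Ints:
  assumes "finite B" "independent B" "(\<Sum>b\<in>B. u b *\<^sub>R b) \<in> int_span B" "b \<in> B"
  shows "u b \<in> \<int>"
proof -
  obtain c where "(\<Sum>b\<in>B. u b *\<^sub>R b) = (\<Sum>b\<in>B. of_int (c b) *\<^sub>R b)"
    using assms(3) by (rule int_spanE)
  then have "(\<Sum>b\<in>B. (u b - of_int (c b)) *\<^sub>R b) = 0"
    by (simp add: scaleR_diff_left sum_subtractf)
  then have "u b - of_int (c b) = 0"
    by (rule independentD[OF assms(2,1) order_refl _ assms(4)])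
  then show ?thesis
    by (metis Ints_of_int right_minus_eq)
qed

lemma is_latticeE:
  assumes "is_lattice N"
  obtains B where "finite B" "independent B" "N = int_span B"
  using assms unfolding is_lattice_def zbasis_def by blast

lemma lattice_zero: "is_lattice N \<Longrightarrow> 0 \<in> N"
  by (metis is_latticeE int_span_zero)

lemma lattice_diff: "is_lattice N \<Longrightarrow> x \<in> N \<Longrightarrow> y \<in> N \<Longrightarrow> x - y \<in> N"
  by (metis is_latticeE int_span_diff)

lemma lattice_int_scale: "is_lattice N \<Longrightarrow> x \<in> N \<Longrightarrow> of_int k *\<^sub>R x \<in> N"
  by (metis is_latticeE int_span_int_scale)

lemma discrete_real_subgroup_cyclic:
  fixes T :: "real set"
  assumes diff: "\<And>s t. s \<in> T \<Longrightarrow> t \<in> T \<Longrightarrow> s - t \<in> T"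
    and int_mult: "\<And>k t. t \<in> T \<Longrightarrow> of_int k * t \<in> T"
    and one: "1 \<in> T" and fin: "finite (T \<inter> {0<..1})"
  obtains t0 where "0 < t0" "t0 \<in> T" "\<forall>t\<in>T. \<exists>k::int. t = of_int k * t0"
proof -
  define t0 where "t0 = Min (T \<inter> {0<..1})"
  have "t0 \<in> T \<inter> {0<..1}"
    unfolding t0_def using fin one by (intro Min_in) auto
  then have t0: "t0 \<in> T" "0 < t0" "t0 \<le> 1"
    by auto
  have "\<exists>k::int. t = of_int k * t0" if "t \<in> T" for t
  proof -
    define k where "k = \<lfloor>t / t0\<rfloor>"
    define r where "r = t - of_int k * t0"
    have "r \<in> T"
      unfolding r_def using diff[OF that int_mult[OF t0(1)]] .
    have "of_int k * t0 \<le> t" "t < (of_int k + 1) * t0"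
      using t0(2) unfolding k_def
      by (simp_all add: pos_le_divide_eq[symmetric] pos_divide_less_eq[symmetric])
    then have r: "0 \<le> r" "r < t0"
      unfolding r_def by (simp_all add: algebra_simps)
    have "r = 0"
    proof (rule ccontr)
      assume "r \<noteq> 0"
      then have "r \<in> T \<inter> {0<..1}"
        using r t0(3) \<open>r \<in> T\<close> by simp
      then have "t0 \<le> r"
        using fin unfolding t0_def by simp
      then show False
        using r by simp
    qed
    then show ?thesis
      unfolding r_def by auto
  qed
  then show thesis
    using that t0 by blast
qed

lemma finite_Ints_multiples_Ioc:
  fixes T :: "real set"
  assumes T: "\<And>t. t \<in> T \<Longrightarrow> t * of_int c \<in> \<int>" and c: "c \<noteq> 0"
  shows "finite (T \<inter> {0<..1})"
proof -
  have "T \<inter> {0<..1} \<subseteq> (\<lambda>k. of_int k / of_int c) ` {-\<bar>c\<bar>..\<bar>c\<bar>}"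
  proof
    fix t assume t: "t \<in> T \<inter> {0<..1}"
    then obtain k where k: "t * of_int c = of_int k"
      using T by (metis IntD1 Ints_cases)
    have "\<bar>of_int k\<bar> = \<bar>t\<bar> * \<bar>of_int c :: real\<bar>"
      by (simp add: k[symmetric] abs_mult)
    also have "\<dots> \<le> \<bar>of_int c\<bar>"
      using t by (intro mult_left_le_one_le) auto
    finally have "k \<in> {-\<bar>c\<bar>..\<bar>c\<bar>}"
      by auto
    moreover have "t = of_int k / of_int c"
      using k c by (simp add: field_simps)
    ultimately show "t \<in> (\<lambda>k. of_int k / of_int c) ` {-\<bar>c\<bar>..\<bar>c\<bar>}"
      by blast
  qed
  then show ?thesis
    by (rule finite_subset) simp
qed

lemma lattice_line_cyclic:
  assumes L: "is_lattice N" and g: "g \<in> N" "g \<noteq> 0"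
  obtains t0 where "0 < t0" "t0 *\<^sub>R g \<in> N" "\<forall>t. t *\<^sub>R g \<in> N \<longrightarrow> (\<exists>k::int. t = of_int k * t0)"
proof -
  obtain B where B: "finite B" "independent B" "N = int_span B"
    using L by (rule is_latticeE)
  obtain c where c: "g = (\<Sum>b\<in>B. of_int (c b) *\<^sub>R b)"
    using g(1) B(3) by (metis int_spanE)
  obtain b0 where b0: "b0 \<in> B" "c b0 \<noteq> 0"
    using g(2) c by (metis (mono_tags, lifting) of_int_0 scaleR_zero_left sum.neutral)
  define T where "T = {t. t *\<^sub>R g \<in> N}"
  have T_Ints: "t * of_int (c b0) \<in> \<int>" if "t \<in> T" for t
  proof -
    have "(\<Sum>b\<in>B. (t * of_int (c b)) *\<^sub>R b) \<in> int_span B"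
      using that B(3) unfolding T_def c by (simp add: scaleR_sum_right)
    then show ?thesis
      using int_span_coeffs_Ints[OF B(1,2) _ b0(1), of "\<lambda>b. t * of_int (c b)"] by simp
  qed
  then have "finite (T \<inter> {0<..1})"
    using b0(2) by (rule finite_Ints_multiples_Ioc)
  moreover have "1 \<in> T"
    using g(1) unfolding T_def by simp
  moreover have "s - t \<in> T" if "s \<in> T" "t \<in> T" for s t
    using lattice_diff[OF L, of "s *\<^sub>R g" "t *\<^sub>R g"] that unfolding T_def by (simp add: scaleR_diff_left)
  moreover have "of_int k * t \<in> T" if "t \<in> T" for k t
    using lattice_int_scale[OF L, of "t *\<^sub>R g" k] that unfolding T_def by simp
  ultimately obtain t0 where "0 < t0" "t0 \<in> T" "\<forall>t\<in>T. \<exists>k::int. t = of_int k * t0"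
    using discrete_real_subgroup_cyclic by metis
  then show thesis
    using that unfolding T_def by blast
qed

definition is_prim_gen :: "'a::euclidean_space set \<Rightarrow> 'a set \<Rightarrow> 'a \<Rightarrow> bool" where
  "is_prim_gen N \<rho> u \<longleftrightarrow> u \<in> \<rho> \<inter> N \<and> u \<noteq> 0 \<and> (\<forall>v\<in>\<rho> \<inter> N. \<exists>k::nat. v = real k *\<^sub>R u)"

lemma is_prim_gen_unique:
  assumes "is_prim_gen N \<rho> u" "is_prim_gen N \<rho> u'"
  shows "u = u'"
proof -
  obtain k k' :: nat where k: "u' = real k *\<^sub>R u" "u = real k' *\<^sub>R u'"
    using assms unfolding is_prim_gen_def by blast
  have "u = real k' *\<^sub>R (real k *\<^sub>R u)"
    using k by (simp only:)
  then have "u = real (k' * k) *\<^sub>R u"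
    by simp
  then have "(real (k' * k) - 1) *\<^sub>R u = 0"
    by (simp add: scaleR_diff_left)
  then have "real (k' * k) - 1 = 0"
    using assms(1) unfolding is_prim_gen_def by simp
  then have "k' * k = 1"
    by (metis of_nat_eq_1_iff right_minus_eq)
  then show ?thesis
    using k(1) by simp
qed

lemma prim_gen_eqI:
  assumes "is_prim_gen N \<rho> u"
  shows "prim_gen N \<rho> = u"
proof -
  have "prim_gen N \<rho> = (THE u. is_prim_gen N \<rho> u)"
    by (simp add: prim_gen_def is_prim_gen_def)
  also have "\<dots> = u"
    using assms is_prim_gen_unique by blast
  finally show ?thesis .
qed

lemma is_prim_gen_conic_hull:
  assumes L: "is_lattice N" and g: "g \<in> N" "g \<noteq> 0"
  obtains t0 where "0 < t0" "is_prim_gen N (conic hull {g}) (t0 *\<^sub>R g)"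
proof -
  obtain t0 where t0: "0 < t0" "t0 *\<^sub>R g \<in> N" "\<forall>t. t *\<^sub>R g \<in> N \<longrightarrow> (\<exists>k::int. t = of_int k * t0)"
    using lattice_line_cyclic[OF assms] .
  have "\<exists>k::nat. v = real k *\<^sub>R (t0 *\<^sub>R g)" if v: "v \<in> conic hull {g} \<inter> N" for v
  proof -
    obtain s where s: "0 \<le> s" "v = s *\<^sub>R g" "s *\<^sub>R g \<in> N"
      using v by (auto simp: mem_conic_hull_singleton)
    obtain k :: int where k: "s = of_int k * t0"
      using t0(3) s(3) by blast
    then have "0 \<le> k"
      using s(1) t0(1) by (simp add: zero_le_mult_iff)
    then have "v = real (nat k) *\<^sub>R (t0 *\<^sub>R g)"
      using s(2) k by simp
    then show ?thesis ..
  qed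
  moreover have "t0 *\<^sub>R g \<in> conic hull {g}"
    unfolding mem_conic_hull_singleton using t0(1) by (intro exI[of _ t0]) simp
  ultimately show thesis
    using that t0 g(2) unfolding is_prim_gen_def by auto
qed

lemma rat_cone_dim_oneE:
  assumes \<rho>: "rat_cone N \<rho>" "dim \<rho> = 1"
  obtains g where "g \<in> N" "g \<noteq> 0" "\<rho> = conic hull {g}"
proof -
  obtain G where G: "finite G" "G \<subseteq> N" "\<rho> = pos_hull G"
    using \<rho>(1) by (rule rat_coneE)
  obtain g where g: "g \<in> G" "g \<noteq> 0"
  proof (rule ccontr)
    assume "\<not> thesis"
    then have "\<rho> \<subseteq> span {0}"
      using that G(3) pos_hull_subset_span span_mono[of G "{0}"] by blast
    then show False
      using \<rho>(2) dim_eq_0[of \<rho>] by simp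
  qed
  have g\<rho>: "g \<in> \<rho>"
    using G g(1) by (simp add: pos_hull_eq_convex_cone_hull hull_inc)
  have "\<rho> \<subseteq> span {g}"
    using dim_eq_span[of "{g}" \<rho>] g g\<rho> \<rho>(2) span_superset[of \<rho>] by auto
  have "\<rho> \<subseteq> conic hull {g}"
  proof
    fix h assume "h \<in> \<rho>"
    then obtain a where a: "h = a *\<^sub>R g"
      using \<open>\<rho> \<subseteq> span {g}\<close> by (auto simp: span_singleton)
    have "0 \<le> a"
    proof (rule ccontr)
      assume "\<not> 0 \<le> a"
      then have "- g \<in> \<rho>"
        using convex_cone_scaleR[OF rat_cone_convex_cone[OF \<rho>(1)], of "- 1 / a" h] \<open>h \<in> \<rho>\<close> a
        by simp
      then show False
        using rat_cone_pointed[OF \<rho>(1) g\<rho>, of "- g"] g(2) by simp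
    qed
    then show "h \<in> conic hull {g}"
      using a by (auto simp: mem_conic_hull_singleton)
  qed
  moreover have "conic hull {g} \<subseteq> \<rho>"
    using convex_cone_scaleR[OF rat_cone_convex_cone[OF \<rho>(1)] _ g\<rho>]
    by (auto simp: mem_conic_hull_singleton)
  ultimately show thesis
    using that G(2) g by blast
qed

lemma is_prim_gen_prim_gen:
  assumes L: "is_lattice N" and \<rho>: "rat_cone N \<rho>" "dim \<rho> = 1"
  shows "is_prim_gen N \<rho> (prim_gen N \<rho>)" "\<rho> = conic hull {prim_gen N \<rho>}"
proof -
  obtain g where g: "g \<in> N" "g \<noteq> 0" "\<rho> = conic hull {g}"
    using \<rho> by (rule rat_cone_dim_oneE)
  obtain t0 where t0: "0 < t0" "is_prim_gen N \<rho> (t0 *\<^sub>R g)"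
    using is_prim_gen_conic_hull[OF L g(1,2)] g(3) by metis
  then show "is_prim_gen N \<rho> (prim_gen N \<rho>)"
    using prim_gen_eqI by metis
  have "conic hull {t0 *\<^sub>R g} = conic hull {g}"
    using conic_hull_image_scale[of "{g}" "\<lambda>_. t0"] t0(1) by simp
  then show "\<rho> = conic hull {prim_gen N \<rho>}"
    using g(3) prim_gen_eqI[OF t0(2)] by simp
qed

lemma is_fan_cone: "is_fan N S \<Longrightarrow> \<sigma> \<in> S \<Longrightarrow> rat_cone N \<sigma>"
  unfolding is_fan_def by blast

lemma is_fan_face: "is_fan N S \<Longrightarrow> \<sigma> \<in> S \<Longrightarrow> \<tau> face_of \<sigma> \<Longrightarrow> \<tau> \<noteq> {} \<Longrightarrow> \<tau> \<in> S"
  unfolding is_fan_def by blast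

lemma is_fan_inter_face_of: "is_fan N S \<Longrightarrow> \<sigma> \<in> S \<Longrightarrow> \<tau> \<in> S \<Longrightarrow> (\<sigma> \<inter> \<tau>) face_of \<sigma>"
  unfolding is_fan_def by blast

lemma is_fan_zero_mem: "is_fan N S \<Longrightarrow> \<sigma> \<in> S \<Longrightarrow> 0 \<in> \<sigma>"
  by (meson is_fan_cone rat_cone_convex_cone convex_cone_contains_0)

lemma zero_face_of_rat_cone:
  assumes "rat_cone N \<sigma>"
  shows "{0} face_of \<sigma>"
  unfolding face_of_singleton extreme_point_of_def
proof (intro conjI ballI notI)
  show "0 \<in> \<sigma>"
    using assms rat_cone_convex_cone convex_cone_contains_0 by blast
  fix a b assume ab: "a \<in> \<sigma>" "b \<in> \<sigma>" and "0 \<in> open_segment a b"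
  then obtain u where u: "0 < u" "u < 1" "(1 - u) *\<^sub>R a + u *\<^sub>R b = 0" "a \<noteq> b"
    by (auto simp: in_segment)
  have "(1 - u) *\<^sub>R a \<in> \<sigma>" "u *\<^sub>R b \<in> \<sigma>"
    using u(1,2) ab convex_cone_scaleR[OF rat_cone_convex_cone[OF assms]] by auto
  then have "(1 - u) *\<^sub>R a = 0"
    using u(3) by (rule rat_cone_pointed[OF assms])
  then have "a = 0"
    using u(2) by simp
  moreover have "b = 0"
    using u(1,3) \<open>(1 - u) *\<^sub>R a = 0\<close> by simp
  ultimately show False
    using u(4) by simp
qed

lemma zero_cone_mem_fan: "is_fan N S \<Longrightarrow> {0} \<in> S"
  by (metis is_fan_def ex_in_conv is_fan_cone is_fan_face zero_face_of_rat_cone insert_not_empty)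

lemma raysD: "\<rho> \<in> rays S \<Longrightarrow> \<rho> \<in> S" "\<rho> \<in> rays S \<Longrightarrow> dim \<rho> = 1"
  unfolding rays_def by auto

lemma finite_rays: "is_fan N S \<Longrightarrow> finite (rays S)"
  unfolding is_fan_def rays_def by simp

lemma prim_gen_ray:
  assumes "is_lattice N" "is_fan N S" "\<rho> \<in> rays S"
  shows "prim_gen N \<rho> \<in> \<rho>" "prim_gen N \<rho> \<in> N" "prim_gen N \<rho> \<noteq> 0"
    "\<rho> = conic hull {prim_gen N \<rho>}"
  using is_prim_gen_prim_gen[OF assms(1) is_fan_cone[OF assms(2) raysD(1)[OF assms(3)]] raysD(2)[OF assms(3)]]
  unfolding is_prim_gen_def by auto

lemma prim_gen_inj_on_rays:
  assumes "is_lattice N" "is_fan N S"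
  shows "inj_on (prim_gen N) (rays S)"
  by (rule inj_onI) (metis assms prim_gen_ray(4))

lemma cone_subset_span_prim_gens:
  assumes L: "is_lattice N" and F: "is_fan N S" and \<sigma>: "\<sigma> \<in> S"
  shows "\<sigma> \<subseteq> span (prim_gen N ` {\<rho>\<in>rays S. \<rho> \<subseteq> \<sigma>})"
proof -
  let ?U = "prim_gen N ` {\<rho>\<in>rays S. \<rho> \<subseteq> \<sigma>}"
  have rc: "rat_cone N \<sigma>"
    using F \<sigma> by (rule is_fan_cone)
  obtain G0 where G0: "finite G0" "\<sigma> = pos_hull G0"
    using rc by (metis rat_coneE)
  obtain G where G: "G \<subseteq> G0" "pos_hull G = \<sigma>" "\<And>g. g \<in> G \<Longrightarrow> g \<notin> pos_hull (G - {g})"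
    using pos_hull_minimal_generators[OF G0(1)] G0(2) by metis
  have fin: "finite G"
    using G(1) G0(1) by (rule finite_subset)
  have "g \<in> span ?U" if g: "g \<in> G" for g
  proof -
    have "g \<noteq> 0"
      using G(3)[OF g] convex_cone_contains_0[OF convex_cone_pos_hull] by metis
    have face: "conic hull {g} face_of \<sigma>"
      using conic_hull_generator_face_of_pos_hull[OF fin g G(3)[OF g]] rat_cone_pointed[OF rc] G(2)
      by blast
    have "conic hull {g} \<in> rays S"
      using is_fan_face[OF F \<sigma> face] dim_conic_hull_singleton[OF \<open>g \<noteq> 0\<close>]
      unfolding rays_def by (simp add: conic_hull_eq_empty)
    moreover have "conic hull {g} \<subseteq> \<sigma>"
      using face by (rule face_of_imp_subset)
    ultimately have "prim_gen N (conic hull {g}) \<in> ?U"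
      by blast
    moreover obtain t where "prim_gen N (conic hull {g}) = t *\<^sub>R g" "t \<noteq> 0"
      using prim_gen_ray[OF L F \<open>conic hull {g} \<in> rays S\<close>] by (auto simp: mem_conic_hull_singleton)
    ultimately have "(1 / t) *\<^sub>R (t *\<^sub>R g) \<in> span ?U"
      by (metis span_base span_scale)
    then show "g \<in> span ?U"
      using \<open>t \<noteq> 0\<close> by simp
  qed
  then have "span G \<subseteq> span ?U"
    by (intro span_minimal subsetI) simp_all
  then show ?thesis
    using G(2) pos_hull_subset_span by blast
qed


section \<open>Piecewise linear functions and Courant functions\<close>

lemma intlinI: "linear m \<Longrightarrow> (\<And>x. x \<in> N \<Longrightarrow> m x \<in> \<int>) \<Longrightarrow> m \<in> intlin N"
  unfolding intlin_def by blast

lemma intlinD: "m \<in> intlin N \<Longrightarrow> linear m" "m \<in> intlin N \<Longrightarrow> x \<in> N \<Longrightarrow> m x \<in> \<int>"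
  unfolding intlin_def by auto

lemma intlin_zero: "(\<lambda>x. 0) \<in> intlin N"
  by (simp add: intlinI linear_zero)

lemma intlin_diff: "m \<in> intlin N \<Longrightarrow> m' \<in> intlin N \<Longrightarrow> (\<lambda>x. m x - m' x) \<in> intlin N"
  by (simp add: intlin_def linear_compose_sub)

lemma intlin_int_mult: "m \<in> intlin N \<Longrightarrow> k \<in> \<int> \<Longrightarrow> (\<lambda>x. k * m x) \<in> intlin N"
  using linear_compose_scale_right[of m k] by (simp add: intlin_def)

lemma PLI: "(\<And>\<sigma>. \<sigma> \<in> S \<Longrightarrow> \<exists>m\<in>intlin N. \<forall>x\<in>\<sigma>. f x = m x) \<Longrightarrow> f \<in> PL N S"
  unfolding PL_def by blast

lemma PLE:
  assumes "f \<in> PL N S" "\<sigma> \<in> S"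
  obtains m where "m \<in> intlin N" "\<forall>x\<in>\<sigma>. f x = m x"
  using assms unfolding PL_def by blast

lemma PL_zero: "(\<lambda>x. 0) \<in> PL N S"
  unfolding PL_def by (auto intro!: bexI[OF _ intlin_zero])

lemma PL_diff:
  assumes "f \<in> PL N S" "g \<in> PL N S"
  shows "(\<lambda>x. f x - g x) \<in> PL N S"
proof (rule PLI)
  fix \<sigma> assume "\<sigma> \<in> S"
  then obtain m m' where "m \<in> intlin N" "\<forall>x\<in>\<sigma>. f x = m x" "m' \<in> intlin N" "\<forall>x\<in>\<sigma>. g x = m' x"
    using assms by (metis PLE)
  then show "\<exists>m\<in>intlin N. \<forall>x\<in>\<sigma>. f x - g x = m x"
    by (intro bexI[of _ "\<lambda>x. m x - m' x"] intlin_diff) auto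
qed

lemma PL_add:
  assumes "f \<in> PL N S" "g \<in> PL N S"
  shows "(\<lambda>x. f x + g x) \<in> PL N S"
  using PL_diff[OF assms(1) PL_diff[OF PL_zero assms(2)]] by simp

lemma PL_int_mult:
  assumes "f \<in> PL N S" "k \<in> \<int>"
  shows "(\<lambda>x. k * f x) \<in> PL N S"
proof (rule PLI)
  fix \<sigma> assume "\<sigma> \<in> S"
  with assms(1) obtain m where "m \<in> intlin N" "\<forall>x\<in>\<sigma>. f x = m x"
    by (rule PLE)
  then show "\<exists>m\<in>intlin N. \<forall>x\<in>\<sigma>. k * f x = m x"
    using assms(2) by (intro bexI[of _ "\<lambda>x. k * m x"] intlin_int_mult) auto
qed

lemma PL_sum:
  assumes "finite R" "\<And>r. r \<in> R \<Longrightarrow> g r \<in> PL N S"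
  shows "(\<lambda>x. \<Sum>r\<in>R. g r x) \<in> PL N S"
  using assms by (induction R rule: finite_induct) (simp_all add: PL_zero PL_add)

lemma PL_zero_at_zero:
  assumes "is_fan N S" "f \<in> PL N S"
  shows "f 0 = 0"
proof -
  obtain \<sigma> where "\<sigma> \<in> S"
    using assms(1) unfolding is_fan_def by blast
  with assms(2) obtain m where "m \<in> intlin N" "\<forall>x\<in>\<sigma>. f x = m x"
    by (rule PLE)
  then show ?thesis
    using is_fan_zero_mem[OF assms(1) \<open>\<sigma> \<in> S\<close>] linear_0[OF intlinD(1)] by simp
qed

lemma PL_Ints:
  assumes "f \<in> PL N S" "\<sigma> \<in> S" "x \<in> \<sigma>" "x \<in> N"
  shows "f x \<in> \<int>"
proof -
  obtain m where "m \<in> intlin N" "\<forall>y\<in>\<sigma>. f y = m y"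
    using assms(1,2) by (rule PLE)
  then show ?thesis
    using intlinD(2) assms(3,4) by simp
qed

lemma PL_prim_gen_Ints:
  assumes "is_lattice N" "is_fan N S" "\<rho> \<in> rays S" "f \<in> PL N S"
  shows "f (prim_gen N \<rho>) \<in> \<int>"
  using PL_Ints[OF assms(4) raysD(1)[OF assms(3)]] prim_gen_ray[OF assms(1-3)] by simp

lemma linear_eq_on_cone:
  assumes L: "is_lattice N" and F: "is_fan N S" and \<sigma>: "\<sigma> \<in> S" "x \<in> \<sigma>"
    and lin: "linear m" "linear m'"
    and gens: "\<And>\<rho>. \<rho> \<in> rays S \<Longrightarrow> \<rho> \<subseteq> \<sigma> \<Longrightarrow> m (prim_gen N \<rho>) = m' (prim_gen N \<rho>)"
  shows "m x = m' x"
proof (rule linear_eq_on_span[OF lin])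
  show "x \<in> span (prim_gen N ` {\<rho>\<in>rays S. \<rho> \<subseteq> \<sigma>})"
    using cone_subset_span_prim_gens[OF L F \<sigma>(1)] \<sigma>(2) by blast
qed (use gens in auto)

lemma PL_eq_on_support:
  assumes L: "is_lattice N" and F: "is_fan N S" and fg: "f \<in> PL N S" "g \<in> PL N S"
    and gens: "\<And>\<rho>. \<rho> \<in> rays S \<Longrightarrow> f (prim_gen N \<rho>) = g (prim_gen N \<rho>)"
    and x: "x \<in> \<Union>S"
  shows "f x = g x"
proof -
  obtain \<sigma> where \<sigma>: "\<sigma> \<in> S" "x \<in> \<sigma>"
    using x by blast
  obtain m m' where m: "m \<in> intlin N" "\<forall>y\<in>\<sigma>. f y = m y" "m' \<in> intlin N" "\<forall>y\<in>\<sigma>. g y = m' y"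
    using fg \<sigma>(1) by (metis PLE)
  have "m x = m' x"
  proof (rule linear_eq_on_cone[OF L F \<sigma> intlinD(1)[OF m(1)] intlinD(1)[OF m(3)]])
    fix \<rho> assume "\<rho> \<in> rays S" "\<rho> \<subseteq> \<sigma>"
    then show "m (prim_gen N \<rho>) = m' (prim_gen N \<rho>)"
      using m gens prim_gen_ray(1)[OF L F] by (metis subsetD)
  qed
  then show ?thesis
    using m \<sigma>(2) by simp
qed

lemma PL_glue:
  assumes "\<And>\<sigma>. \<sigma> \<in> S \<Longrightarrow> M \<sigma> \<in> intlin N"
    and agree: "\<And>\<sigma> \<tau> x. \<sigma> \<in> S \<Longrightarrow> \<tau> \<in> S \<Longrightarrow> x \<in> \<sigma> \<Longrightarrow> x \<in> \<tau> \<Longrightarrow> M \<sigma> x = M \<tau> x"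
  obtains g where "g \<in> PL N S" "\<forall>\<sigma>\<in>S. \<forall>x\<in>\<sigma>. g x = M \<sigma> x"
proof -
  define g where "g x = M (SOME \<sigma>. \<sigma> \<in> S \<and> x \<in> \<sigma>) x" for x
  have gM: "g x = M \<sigma> x" if "\<sigma> \<in> S" "x \<in> \<sigma>" for \<sigma> x
  proof -
    let ?\<tau> = "SOME \<sigma>. \<sigma> \<in> S \<and> x \<in> \<sigma>"
    have "?\<tau> \<in> S \<and> x \<in> ?\<tau>"
      by (rule someI[of "\<lambda>\<tau>. \<tau> \<in> S \<and> x \<in> \<tau>" \<sigma>]) (use that in simp)
    then show ?thesis
      unfolding g_def using agree[of ?\<tau> \<sigma> x] that by simp
  qed
  have "g \<in> PL N S"
  proof (rule PLI)
    fix \<sigma> assume "\<sigma> \<in> S"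
    then show "\<exists>m\<in>intlin N. \<forall>x\<in>\<sigma>. g x = m x"
      using assms(1) gM by blast
  qed
  then show thesis
    using that gM by blast
qed

lemma intlin_interpolate_on_cone:
  assumes U: "unimodular_fan N S" and \<sigma>: "\<sigma> \<in> S" and a: "\<And>\<rho>. \<rho> \<in> rays S \<Longrightarrow> a \<rho> \<in> \<int>"
  obtains m where "m \<in> intlin N" "\<forall>\<rho>\<in>rays S. \<rho> \<subseteq> \<sigma> \<longrightarrow> m (prim_gen N \<rho>) = a \<rho>"
proof -
  have L: "is_lattice N" and F: "is_fan N S"
    using U unfolding unimodular_fan_def by auto
  obtain B where B: "finite B" "independent B" "N = int_span B" "prim_gen N ` {\<rho>\<in>rays S. \<rho> \<subseteq> \<sigma>} \<subseteq> B"
    using U \<sigma> unfolding unimodular_fan_def zbasis_def by blast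
  define val where
    "val b = (if b \<in> prim_gen N ` rays S then a (inv_into (rays S) (prim_gen N) b) else 0)" for b
  have val_Ints: "val b \<in> \<int>" for b
    unfolding val_def using a inv_into_into[of b "prim_gen N" "rays S"] by auto
  have val_prim_gen: "val (prim_gen N \<rho>) = a \<rho>" if "\<rho> \<in> rays S" for \<rho>
    unfolding val_def using that inv_into_f_f[OF prim_gen_inj_on_rays[OF L F]] by simp
  obtain m where m: "linear m" "\<forall>b\<in>B. m b = val b"
    using linear_independent_extend[OF B(2)] by blast
  have "m \<in> intlin N"
  proof (rule intlinI[OF m(1)])
    fix n assume "n \<in> N"
    then obtain c where "n = (\<Sum>b\<in>B. of_int (c b) *\<^sub>R b)"
      using B(3) by (metis int_spanE)
    then have "m n = (\<Sum>b\<in>B. of_int (c b) * val b)"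
      using m by (simp add: linear_sum[OF m(1)] linear_scale[OF m(1)])
    then show "m n \<in> \<int>"
      using val_Ints by (simp add: Ints_sum)
  qed
  moreover have "\<forall>\<rho>\<in>rays S. \<rho> \<subseteq> \<sigma> \<longrightarrow> m (prim_gen N \<rho>) = a \<rho>"
    using B(4) m(2) val_prim_gen by auto
  ultimately show thesis
    using that by blast
qed

lemma PL_interpolate:
  assumes U: "unimodular_fan N S" and a: "\<And>\<rho>. \<rho> \<in> rays S \<Longrightarrow> a \<rho> \<in> \<int>"
  obtains g where "g \<in> PL N S" "\<forall>\<rho>\<in>rays S. g (prim_gen N \<rho>) = a \<rho>"
proof -
  have L: "is_lattice N" and F: "is_fan N S"
    using U unfolding unimodular_fan_def by auto
  have "\<forall>\<sigma>\<in>S. \<exists>m. m \<in> intlin N \<and> (\<forall>\<rho>\<in>rays S. \<rho> \<subseteq> \<sigma> \<longrightarrow> m (prim_gen N \<rho>) = a \<rho>)"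
  proof
    fix \<sigma> assume "\<sigma> \<in> S"
    obtain m where "m \<in> intlin N" "\<forall>\<rho>\<in>rays S. \<rho> \<subseteq> \<sigma> \<longrightarrow> m (prim_gen N \<rho>) = a \<rho>"
      by (rule intlin_interpolate_on_cone[OF U \<open>\<sigma> \<in> S\<close> a])
    then show "\<exists>m. m \<in> intlin N \<and> (\<forall>\<rho>\<in>rays S. \<rho> \<subseteq> \<sigma> \<longrightarrow> m (prim_gen N \<rho>) = a \<rho>)"
      by blast
  qed
  then obtain M where M: "\<forall>\<sigma>\<in>S. M \<sigma> \<in> intlin N \<and> (\<forall>\<rho>\<in>rays S. \<rho> \<subseteq> \<sigma> \<longrightarrow> M \<sigma> (prim_gen N \<rho>) = a \<rho>)"
    by (rule bchoice [THEN exE])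
  have agree: "M \<sigma> x = M \<tau> x" if \<sigma>\<tau>: "\<sigma> \<in> S" "\<tau> \<in> S" "x \<in> \<sigma>" "x \<in> \<tau>" for \<sigma> \<tau> x
  proof (rule linear_eq_on_cone[OF L F _ _ intlinD(1) intlinD(1)])
    show "\<sigma> \<inter> \<tau> \<in> S"
      using is_fan_face[OF F \<sigma>\<tau>(1) is_fan_inter_face_of[OF F \<sigma>\<tau>(1,2)]] \<sigma>\<tau>(3,4) by blast
  qed (use \<sigma>\<tau> M in auto)
  have "M \<sigma> \<in> intlin N" if "\<sigma> \<in> S" for \<sigma>
    using M that by blast
  then obtain g where g: "g \<in> PL N S" "\<forall>\<sigma>\<in>S. \<forall>x\<in>\<sigma>. g x = M \<sigma> x"
    using agree by (rule PL_glue)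
  have "g (prim_gen N \<rho>) = a \<rho>" if "\<rho> \<in> rays S" for \<rho>
    using g(2) M raysD(1)[OF that] prim_gen_ray(1)[OF L F that] that by simp
  then show thesis
    using that g(1) by blast
qed

lemma courant_spec:
  assumes "unimodular_fan N S" "\<rho> \<in> rays S"
  shows "courant N S \<rho> \<in> PL N S \<and> courant N S \<rho> (prim_gen N \<rho>) = 1 \<and>
    (\<forall>\<rho>'\<in>rays S. \<rho>' \<noteq> \<rho> \<longrightarrow> courant N S \<rho> (prim_gen N \<rho>') = 0)"
proof -
  obtain g where "g \<in> PL N S" "\<forall>\<rho>'\<in>rays S. g (prim_gen N \<rho>') = (if \<rho>' = \<rho> then 1 else 0)"
    by (rule PL_interpolate[OF assms(1), where a = "\<lambda>\<rho>'. if \<rho>' = \<rho> then 1 else 0"]) auto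
  then have "\<exists>g. g \<in> PL N S \<and> g (prim_gen N \<rho>) = 1 \<and>
      (\<forall>\<rho>'\<in>rays S. \<rho>' \<noteq> \<rho> \<longrightarrow> g (prim_gen N \<rho>') = 0)"
    using assms(2) by (intro exI[of _ g]) auto
  then show ?thesis
    unfolding courant_def by (rule someI_ex)
qed

lemma courant_PL: "unimodular_fan N S \<Longrightarrow> \<rho> \<in> rays S \<Longrightarrow> courant N S \<rho> \<in> PL N S"
  using courant_spec by blast

lemma courant_prim_gen:
  "unimodular_fan N S \<Longrightarrow> \<rho> \<in> rays S \<Longrightarrow> \<rho>' \<in> rays S \<Longrightarrow>
    courant N S \<rho> (prim_gen N \<rho>') = (if \<rho>' = \<rho> then 1 else 0)"
  using courant_spec[of N S \<rho>] by simp

lemma courant_eq_on_support: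
  assumes U: "unimodular_fan N S" and \<rho>: "\<rho> \<in> rays S" and g: "g \<in> PL N S"
    and gens: "\<And>\<rho>'. \<rho>' \<in> rays S \<Longrightarrow> g (prim_gen N \<rho>') = (if \<rho>' = \<rho> then 1 else 0)"
    and x: "x \<in> \<Union>S"
  shows "courant N S \<rho> x = g x"
  using U PL_eq_on_support[OF _ _ courant_PL[OF U \<rho>] g _ x] courant_prim_gen[OF U \<rho>] gens
  unfolding unimodular_fan_def by simp

lemma PL_eq_courant_sum:
  assumes U: "unimodular_fan N S" and f: "f \<in> PL N S" and x: "x \<in> \<Union>S"
  shows "f x = (\<Sum>\<rho>\<in>rays S. f (prim_gen N \<rho>) * courant N S \<rho> x)"
proof -
  have L: "is_lattice N" and F: "is_fan N S"
    using U unfolding unimodular_fan_def by auto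
  have fin: "finite (rays S)"
    using F by (rule finite_rays)
  show ?thesis
  proof (rule PL_eq_on_support[OF L F f _ _ x])
    show "(\<lambda>x. \<Sum>\<rho>\<in>rays S. f (prim_gen N \<rho>) * courant N S \<rho> x) \<in> PL N S"
      using fin PL_prim_gen_Ints[OF L F _ f]
      by (intro PL_sum PL_int_mult courant_PL[OF U]) auto
    fix \<rho>' assume "\<rho>' \<in> rays S"
    then show "f (prim_gen N \<rho>') = (\<Sum>\<rho>\<in>rays S. f (prim_gen N \<rho>) * courant N S \<rho> (prim_gen N \<rho>'))"
      using fin by (simp add: courant_prim_gen[OF U] if_distrib cong: if_cong)
  qed
qed


section \<open>Star fans\<close>

lemma perp_proj_eqI:
  fixes A :: "'a::euclidean_space set"
  assumes "x - y \<in> span A" "\<forall>a\<in>A. a \<bullet> y = 0"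
  shows "perp_proj A x = y"
  unfolding perp_proj_def
proof (rule the_equality)
  show "x - y \<in> span A \<and> (\<forall>a\<in>A. a \<bullet> y = 0)"
    using assms by blast
  fix y' assume y': "x - y' \<in> span A \<and> (\<forall>a\<in>A. a \<bullet> y' = 0)"
  have "y - y' \<in> span A"
    using span_diff[OF y'[THEN conjunct1] assms(1)] by (simp add: algebra_simps)
  moreover have "orthogonal (y - y') a" if "a \<in> A" for a
    using assms(2) y' that by (simp add: orthogonal_def inner_commute[of _ a] inner_diff_right)
  ultimately have "orthogonal (y - y') (y - y')"
    by (rule orthogonal_to_span)
  then show "y' = y"
    by (simp add: orthogonal_self)
qed

lemma perp_proj_spec:
  fixes A :: "'a::euclidean_space set"
  shows "x - perp_proj A x \<in> span A" "\<forall>a\<in>A. a \<bullet> perp_proj A x = 0"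
proof -
  obtain y z where "y \<in> span A" "\<And>w. w \<in> span A \<Longrightarrow> orthogonal z w" "x = y + z"
    by (metis orthogonal_subspace_decomp_exists)
  then have "perp_proj A x = z"
    by (intro perp_proj_eqI) (auto simp: orthogonal_def inner_commute intro: span_base)
  then show "x - perp_proj A x \<in> span A" "\<forall>a\<in>A. a \<bullet> perp_proj A x = 0"
    using \<open>y \<in> span A\<close> \<open>x = y + z\<close> \<open>\<And>w. w \<in> span A \<Longrightarrow> orthogonal z w\<close>
    by (auto simp: orthogonal_def inner_commute intro: span_base)
qed

lemma perp_proj_eq_imp_diff_in_span:
  fixes A :: "'a::euclidean_space set"
  assumes "perp_proj A x = perp_proj A x'"
  shows "x - x' \<in> span A"
  using span_diff[OF perp_proj_spec(1)[of x A] perp_proj_spec(1)[of x' A]] assms by simp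

lemma perp_proj_zero: "perp_proj (A :: 'a::euclidean_space set) 0 = 0"
  by (rule perp_proj_eqI) (simp_all add: span_zero)

lemma perp_proj_zero_cone: "perp_proj {0 :: 'a::euclidean_space} x = x"
  by (rule perp_proj_eqI) (simp_all add: span_zero)

lemma linear_perp_proj:
  fixes A :: "'a::euclidean_space set"
  assumes "linear L" "\<forall>a\<in>A. L a = 0"
  shows "L (perp_proj A x) = L x"
proof -
  have "L (x - perp_proj A x) = 0"
    using linear_eq_0_on_span[OF assms(1)] assms(2) perp_proj_spec(1) by blast
  then show ?thesis
    by (simp add: linear_diff[OF assms(1)])
qed

definition lin_on_cone :: "'a::euclidean_space set \<Rightarrow> 'a set \<Rightarrow> ('a \<Rightarrow> real) \<Rightarrow> 'a \<Rightarrow> real" where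
  "lin_on_cone N \<sigma> f = (SOME m. m \<in> intlin N \<and> (\<forall>x\<in>\<sigma>. f x = m x))"

lemma lin_on_cone_spec:
  assumes "f \<in> PL N S" "\<sigma> \<in> S"
  shows "lin_on_cone N \<sigma> f \<in> intlin N" "\<forall>x\<in>\<sigma>. f x = lin_on_cone N \<sigma> f x"
proof -
  have "\<exists>m. m \<in> intlin N \<and> (\<forall>x\<in>\<sigma>. f x = m x)"
    using assms by (metis PLE)
  then have "lin_on_cone N \<sigma> f \<in> intlin N \<and> (\<forall>x\<in>\<sigma>. f x = lin_on_cone N \<sigma> f x)"
    unfolding lin_on_cone_def by (rule someI_ex)
  then show "lin_on_cone N \<sigma> f \<in> intlin N" "\<forall>x\<in>\<sigma>. f x = lin_on_cone N \<sigma> f x"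
    by auto
qed

lemma star_fun_lin_on_cone:
  "star_fun N S \<sigma> f = (\<lambda>y. SOME v. \<exists>\<tau>\<in>S. \<sigma> \<subseteq> \<tau> \<and>
     (\<exists>x\<in>\<tau>. perp_proj \<sigma> x = y \<and> v = f x - lin_on_cone N \<sigma> f x))"
  unfolding star_fun_def lin_on_cone_def Let_def ..

text \<open>On a cone containing \<open>\<sigma>\<close>, \<open>f - m\<close> is linear and vanishes on \<open>\<sigma>\<close>.\<close>

lemma PL_diff_intlin_translate:
  assumes F: "is_fan N S" and f: "f \<in> PL N S" and m: "\<forall>a\<in>\<sigma>. f a = m a" "m \<in> intlin N"
    and \<tau>: "\<tau> \<in> S" "\<sigma> \<subseteq> \<tau>" "x \<in> \<tau>" and a: "a \<in> \<sigma>"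
  shows "f (x + a) - m (x + a) = f x - m x"
proof -
  obtain m\<tau> where m\<tau>: "m\<tau> \<in> intlin N" "\<forall>y\<in>\<tau>. f y = m\<tau> y"
    using f \<tau>(1) by (rule PLE)
  have lin: "linear (\<lambda>y. m\<tau> y - m y)"
    using intlinD(1)[OF intlin_diff[OF m\<tau>(1) m(2)]] .
  have "x + a \<in> \<tau>"
    using convex_cone_add[OF rat_cone_convex_cone[OF is_fan_cone[OF F \<tau>(1)]] \<tau>(3)] a \<tau>(2) by blast
  moreover have "m\<tau> a - m a = 0"
    using m(1) m\<tau>(2) a \<tau>(2) by (metis subsetD right_minus_eq)
  ultimately show ?thesis
    using m\<tau>(2) \<tau>(3) linear_add[OF lin, of x a] by simp
qed

lemma star_fun_perp_proj:
  assumes F: "is_fan N S" and f: "f \<in> PL N S" and \<sigma>: "\<sigma> \<in> S"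
    and \<tau>: "\<tau> \<in> S" "\<sigma> \<subseteq> \<tau>" "x \<in> \<tau>"
  shows "star_fun N S \<sigma> f (perp_proj \<sigma> x) = f x - lin_on_cone N \<sigma> f x"
proof -
  let ?m = "lin_on_cone N \<sigma> f"
  let ?P = "\<lambda>v. \<exists>\<tau>\<in>S. \<sigma> \<subseteq> \<tau> \<and> (\<exists>x'\<in>\<tau>. perp_proj \<sigma> x' = perp_proj \<sigma> x \<and> v = f x' - ?m x')"
  have "?P (f x - ?m x)"
    using \<tau> by blast
  then have "?P (SOME v. ?P v)"
    by (rule someI)
  then obtain \<tau>' x' where x': "\<tau>' \<in> S" "\<sigma> \<subseteq> \<tau>'" "x' \<in> \<tau>'" "perp_proj \<sigma> x' = perp_proj \<sigma> x"
    and v: "(SOME v. ?P v) = f x' - ?m x'"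
    by blast
  \<comment> \<open>the two preimages differ by an element of \<open>span \<sigma> = \<sigma> - \<sigma>\<close>\<close>
  obtain a b where ab: "a \<in> \<sigma>" "b \<in> \<sigma>" "x' - x = a - b"
    using span_convex_cone_diff[OF rat_cone_convex_cone[OF is_fan_cone[OF F \<sigma>]]
        perp_proj_eq_imp_diff_in_span[OF x'(4)]] .
  have "x' + b = x + a"
    using ab(3) by (simp add: algebra_simps)
  moreover note translate = PL_diff_intlin_translate[OF F f lin_on_cone_spec(2)[OF f \<sigma>] lin_on_cone_spec(1)[OF f \<sigma>]]
  ultimately have "f x' - ?m x' = f x - ?m x"
    using translate[OF x'(1-3) ab(2)] translate[OF \<tau> ab(1)] by simp
  then show ?thesis
    unfolding star_fun_lin_on_cone using v by simp
qed

lemma star_fan_memE: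
  assumes "C \<in> star_fan S \<sigma>"
  obtains \<tau> \<tau>' where "C = perp_proj \<sigma> ` \<tau>" "\<tau>' \<in> S" "\<sigma> \<subseteq> \<tau>'" "\<tau> face_of \<tau>'" "\<tau> \<noteq> {}"
  using assms unfolding star_fan_def by blast

lemma star_fanI:
  "\<tau>' \<in> S \<Longrightarrow> \<sigma> \<subseteq> \<tau>' \<Longrightarrow> \<tau> face_of \<tau>' \<Longrightarrow> \<tau> \<noteq> {} \<Longrightarrow> perp_proj \<sigma> ` \<tau> \<in> star_fan S \<sigma>"
  unfolding star_fan_def by blast

lemma star_fan_supportE:
  assumes "y \<in> \<Union>(star_fan S \<sigma>)"
  obtains \<tau> x where "\<tau> \<in> S" "\<sigma> \<subseteq> \<tau>" "x \<in> \<tau>" "y = perp_proj \<sigma> x"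
proof -
  obtain C where "y \<in> C" "C \<in> star_fan S \<sigma>"
    using assms by blast
  from \<open>C \<in> star_fan S \<sigma>\<close> obtain \<tau> \<tau>' where C: "C = perp_proj \<sigma> ` \<tau>" "\<tau>' \<in> S" "\<sigma> \<subseteq> \<tau>'" "\<tau> face_of \<tau>'"
    by (rule star_fan_memE)
  with \<open>y \<in> C\<close> obtain x where "x \<in> \<tau>" "y = perp_proj \<sigma> x"
    by blast
  then show thesis
    using that C(2,3) face_of_imp_subset[OF C(4)] by blast
qed

lemma intlin_star_lattice:
  fixes N :: "'a::euclidean_space set"
  assumes "m \<in> intlin N" "\<forall>a\<in>\<sigma>. m a = 0"
  shows "m \<in> intlin (star_lattice N \<sigma>)"
proof (rule intlinI)
  show "linear m"
    using assms(1) by (rule intlinD)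
  fix y assume "y \<in> star_lattice N \<sigma>"
  then obtain n where "n \<in> N" "y = perp_proj \<sigma> n"
    unfolding star_lattice_def by blast
  then show "m y \<in> \<int>"
    using linear_perp_proj[OF intlinD(1)[OF assms(1)] assms(2)] intlinD(2)[OF assms(1)] by simp
qed

lemma star_fun_PL:
  assumes F: "is_fan N S" and f: "f \<in> PL N S" and \<sigma>: "\<sigma> \<in> S"
  shows "star_fun N S \<sigma> f \<in> PL (star_lattice N \<sigma>) (star_fan S \<sigma>)"
proof (rule PLI)
  fix C assume "C \<in> star_fan S \<sigma>"
  then obtain \<tau> \<tau>' where C: "C = perp_proj \<sigma> ` \<tau>" "\<tau>' \<in> S" "\<sigma> \<subseteq> \<tau>'" "\<tau> face_of \<tau>'"
    by (rule star_fan_memE)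
  obtain m where m: "m \<in> intlin N" "\<forall>y\<in>\<tau>'. f y = m y"
    using f C(2) by (rule PLE)
  define h where "h y = m y - lin_on_cone N \<sigma> f y" for y
  have h: "h \<in> intlin N"
    unfolding h_def using intlin_diff[OF m(1) lin_on_cone_spec(1)[OF f \<sigma>]] .
  have h0: "\<forall>a\<in>\<sigma>. h a = 0"
    using C(3) m(2) lin_on_cone_spec(2)[OF f \<sigma>] unfolding h_def by (metis subsetD right_minus_eq)
  have "star_fun N S \<sigma> f y = h y" if y: "y \<in> C" for y
  proof -
    obtain x where x: "x \<in> \<tau>" "y = perp_proj \<sigma> x"
      using y C(1) by blast
    then have "x \<in> \<tau>'"
      using face_of_imp_subset[OF C(4)] by blast
    then have "star_fun N S \<sigma> f y = h x"
      unfolding x(2) h_def using star_fun_perp_proj[OF F f \<sigma> C(2,3)] m(2) by simp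
    also have "\<dots> = h y"
      unfolding x(2) by (rule linear_perp_proj[OF intlinD(1)[OF h] h0, symmetric])
    finally show ?thesis .
  qed
  then show "\<exists>m\<in>intlin (star_lattice N \<sigma>). \<forall>y\<in>C. star_fun N S \<sigma> f y = m y"
    using intlin_star_lattice[OF h h0] by blast
qed

lemma star_lattice_zero_cone: "star_lattice N {0} = N"
  by (simp add: star_lattice_def perp_proj_zero_cone)

lemma star_fan_zero_cone:
  assumes F: "is_fan N S"
  shows "star_fan S {0} = S"
proof
  show "star_fan S {0} \<subseteq> S"
    using is_fan_face[OF F] by (auto simp: star_fan_def perp_proj_zero_cone)
  show "S \<subseteq> star_fan S {0}"
  proof
    fix \<tau> assume "\<tau> \<in> S"
    moreover have "\<tau> face_of \<tau>"
      using rat_cone_convex[OF is_fan_cone[OF F \<open>\<tau> \<in> S\<close>]] by (rule face_of_refl)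
    ultimately show "\<tau> \<in> star_fan S {0}"
      using is_fan_zero_mem[OF F] unfolding star_fan_def perp_proj_zero_cone by fastforce
  qed
qed

section \<open>Uniqueness of the Ehrhart polynomial\<close>

definition eq_mod_M :: "'a::euclidean_space set \<Rightarrow> 'a set set \<Rightarrow> ('a \<Rightarrow> real) \<Rightarrow> ('a \<Rightarrow> real) \<Rightarrow> bool" where
  "eq_mod_M N S f g \<longleftrightarrow> (\<exists>m\<in>intlin N. \<forall>x\<in>\<Union>S. f x = g x + m x)"

lemma eq_mod_M_if_eq_on_support: "(\<And>x. x \<in> \<Union>S \<Longrightarrow> f x = g x) \<Longrightarrow> eq_mod_M N S f g"
  unfolding eq_mod_M_def using intlin_zero by fastforce

lemma star_fun_zero_cone_eq_mod_M:
  assumes F: "is_fan N S" and f: "f \<in> PL N S"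
  shows "eq_mod_M N S (star_fun N S {0} f) f"
proof -
  let ?m = "\<lambda>x. 0 - lin_on_cone N {0} f x"
  have "{0} \<in> S"
    using F by (rule zero_cone_mem_fan)
  have "star_fun N S {0} f x = f x + ?m x" if x: "x \<in> \<Union>S" for x
  proof -
    obtain \<tau> where "\<tau> \<in> S" "x \<in> \<tau>"
      using x by blast
    then show ?thesis
      using star_fun_perp_proj[OF F f \<open>{0} \<in> S\<close> \<open>\<tau> \<in> S\<close>] is_fan_zero_mem[OF F]
      by (simp add: perp_proj_zero_cone)
  qed
  moreover have "?m \<in> intlin N"
    using intlin_diff[OF intlin_zero lin_on_cone_spec(1)[OF f \<open>{0} \<in> S\<close>]] .
  ultimately show ?thesis
    unfolding eq_mod_M_def by (intro bexI[of _ ?m]) auto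
qed

lemma ehr_chi_unimodular: "ehr_chi N S c \<Longrightarrow> unimodular_fan N S"
  by (cases rule: ehr_chi.cases) auto

lemma ehr_chi_zero: "ehr_chi N S c \<Longrightarrow> c (\<lambda>x. 0) = 1"
  by (cases rule: ehr_chi.cases) auto

lemma ehr_chi_eq_mod_M:
  "ehr_chi N S c \<Longrightarrow> f \<in> PL N S \<Longrightarrow> g \<in> PL N S \<Longrightarrow> eq_mod_M N S f g \<Longrightarrow> c f = c g"
  unfolding eq_mod_M_def by (cases rule: ehr_chi.cases) auto

lemma ehr_chi_recursion:
  assumes "ehr_chi N S c" "\<rho> \<in> rays S"
  obtains c' where "ehr_chi (star_lattice N \<rho>) (star_fan S \<rho>) c'"
    "\<forall>f\<in>PL N S. c f = c (\<lambda>x. f x - courant N S \<rho> x) + c' (star_fun N S \<rho> f)"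
  using assms by (cases rule: ehr_chi.cases) auto

lemma courant_int_mult_invariant:
  fixes D :: "('a::euclidean_space \<Rightarrow> real) \<Rightarrow> int"
  assumes U: "unimodular_fan N S" and \<rho>: "\<rho> \<in> rays S"
    and inv: "\<And>g. g \<in> PL N S \<Longrightarrow> D (\<lambda>x. g x - courant N S \<rho> x) = D g"
    and g: "g \<in> PL N S"
  shows "D (\<lambda>x. g x - of_int k * courant N S \<rho> x) = D g"
proof (induction k rule: int_induct[where k = 0])
  case (step1 i)
  have "(\<lambda>x. g x - of_int i * courant N S \<rho> x) \<in> PL N S"
    by (intro PL_diff[OF g] PL_int_mult courant_PL[OF U \<rho>]) simp
  from inv[OF this] show ?case
    using step1 by (simp add: algebra_simps)
next
  case (step2 i)
  have "(\<lambda>x. g x - of_int (i - 1) * courant N S \<rho> x) \<in> PL N S"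
    by (intro PL_diff[OF g] PL_int_mult courant_PL[OF U \<rho>]) simp
  from inv[OF this] show ?case
    using step2 by (simp add: algebra_simps)
qed simp

lemma courant_comb_invariant:
  fixes D :: "('a::euclidean_space \<Rightarrow> real) \<Rightarrow> int"
  assumes U: "unimodular_fan N S"
    and inv: "\<And>g \<rho>. g \<in> PL N S \<Longrightarrow> \<rho> \<in> rays S \<Longrightarrow> D (\<lambda>x. g x - courant N S \<rho> x) = D g"
    and g: "g \<in> PL N S" and R: "R \<subseteq> rays S" and a: "\<And>\<rho>. \<rho> \<in> R \<Longrightarrow> a \<rho> \<in> \<int>"
  shows "D (\<lambda>x. g x - (\<Sum>\<rho>\<in>R. a \<rho> * courant N S \<rho> x)) = D g"
proof -
  have "is_fan N S"
    using U unfolding unimodular_fan_def by blast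
  with R have "finite R"
    using finite_rays finite_subset by blast
  then show ?thesis
    using R a
  proof (induction R rule: finite_induct)
    case (insert \<rho> R)
    let ?h = "\<lambda>x. g x - (\<Sum>\<rho>\<in>R. a \<rho> * courant N S \<rho> x)"
    have \<rho>: "\<rho> \<in> rays S"
      using insert.prems(1) by blast
    have "?h \<in> PL N S"
      using insert.hyps insert.prems by (intro PL_diff[OF g] PL_sum PL_int_mult courant_PL[OF U]) auto
    moreover obtain k where "a \<rho> = of_int k"
      using insert.prems(2) by (blast elim: Ints_cases)
    ultimately have "D (\<lambda>x. ?h x - a \<rho> * courant N S \<rho> x) = D ?h"
      using courant_int_mult_invariant[where D = D, OF U \<rho> inv[OF _ \<rho>]] by simp
    then show ?case
      using insert by (simp add: algebra_simps)
  qed simp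
qed

lemma ehr_chi_unique:
  assumes "ehr_chi N S c" "ehr_chi N S c'" "f \<in> PL N S"
  shows "c f = c' f"
  using assms
proof (induction arbitrary: c' f rule: ehr_chi.induct)
  case (1 N S c)
  have U: "unimodular_fan N S" and L: "is_lattice N" and F: "is_fan N S"
    using 1(1) unfolding unimodular_fan_def by auto
  define D where "D g = c g - c' g" for g
  have inv: "D (\<lambda>x. g x - courant N S \<rho> x) = D g" if g: "g \<in> PL N S" and \<rho>: "\<rho> \<in> rays S" for g \<rho>
  proof -
    obtain r where r: "ehr_chi (star_lattice N \<rho>) (star_fan S \<rho>) r"
      "\<And>r' h. ehr_chi (star_lattice N \<rho>) (star_fan S \<rho>) r' \<Longrightarrow>
         h \<in> PL (star_lattice N \<rho>) (star_fan S \<rho>) \<Longrightarrow> r h = r' h"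
      "\<forall>f\<in>PL N S. c f = c (\<lambda>x. f x - courant N S \<rho> x) + r (star_fun N S \<rho> f)"
      using 1(4) \<rho> by blast
    obtain r' where r': "ehr_chi (star_lattice N \<rho>) (star_fan S \<rho>) r'"
      "\<forall>f\<in>PL N S. c' f = c' (\<lambda>x. f x - courant N S \<rho> x) + r' (star_fun N S \<rho> f)"
      using ehr_chi_recursion[OF 1(5) \<rho>] .
    have "r (star_fun N S \<rho> g) = r' (star_fun N S \<rho> g)"
      using r(2)[OF r'(1) star_fun_PL[OF F g raysD(1)[OF \<rho>]]] .
    then show ?thesis
      unfolding D_def using r(3) r'(2) g by simp
  qed
  let ?a = "\<lambda>\<rho>. f (prim_gen N \<rho>)"
  let ?f0 = "\<lambda>x. f x - (\<Sum>\<rho>\<in>rays S. ?a \<rho> * courant N S \<rho> x)"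
  have a: "?a \<rho> \<in> \<int>" if "\<rho> \<in> rays S" for \<rho>
    using PL_prim_gen_Ints[OF L F that 1(6)] .
  have "D ?f0 = D f"
    by (rule courant_comb_invariant[where D = D, OF U inv 1(6) order_refl a])
  moreover have f0: "?f0 \<in> PL N S"
    using finite_rays[OF F] a by (intro PL_diff[OF 1(6)] PL_sum PL_int_mult courant_PL[OF U])
  moreover have mod0: "eq_mod_M N S ?f0 (\<lambda>x. 0)"
    using PL_eq_courant_sum[OF U 1(6)] by (intro eq_mod_M_if_eq_on_support) simp
  then have "c ?f0 = c (\<lambda>x. 0)"
    using 1(2)[rule_format, OF f0 PL_zero] unfolding eq_mod_M_def by simp
  moreover have "c' ?f0 = c' (\<lambda>x. 0)"
    using ehr_chi_eq_mod_M[OF 1(5) f0 PL_zero mod0] .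
  ultimately show ?case
    using 1(3) ehr_chi_zero[OF 1(5)] unfolding D_def by simp
qed


section \<open>Product fans\<close>

lemma linear_Pair_zero: "linear (\<lambda>x. (x, 0))" "linear (Pair 0)"
  by (auto intro!: linearI simp: zero_prod_def)

lemma int_span_Un:
  assumes "finite B" "finite C" "B \<inter> C = {}"
  shows "int_span (B \<union> C) = {x + y | x y. x \<in> int_span B \<and> y \<in> int_span C}"
proof (intro equalityI subsetI)
  fix z assume "z \<in> int_span (B \<union> C)"
  then obtain c where "z = (\<Sum>b\<in>B \<union> C. of_int (c b) *\<^sub>R b)"
    by (rule int_spanE)
  then have "z = (\<Sum>b\<in>B. of_int (c b) *\<^sub>R b) + (\<Sum>b\<in>C. of_int (c b) *\<^sub>R b)"
    using assms by (simp add: sum.union_disjoint)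
  then show "z \<in> {x + y | x y. x \<in> int_span B \<and> y \<in> int_span C}"
    using int_spanI[OF refl] by blast
next
  fix z assume "z \<in> {x + y | x y. x \<in> int_span B \<and> y \<in> int_span C}"
  then obtain c d where z: "z = (\<Sum>b\<in>B. of_int (c b) *\<^sub>R b) + (\<Sum>b\<in>C. of_int (d b) *\<^sub>R b)"
    by (auto elim!: int_spanE)
  define e where "e b = (if b \<in> B then c b else d b)" for b
  have "(\<Sum>b\<in>B. of_int (e b) *\<^sub>R b) = (\<Sum>b\<in>B. of_int (c b) *\<^sub>R b)"
    unfolding e_def by (rule sum.cong) simp_all
  moreover have "(\<Sum>b\<in>C. of_int (e b) *\<^sub>R b) = (\<Sum>b\<in>C. of_int (d b) *\<^sub>R b)"
    unfolding e_def using assms(3) by (intro sum.cong) auto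
  ultimately have "z = (\<Sum>b\<in>B \<union> C. of_int (e b) *\<^sub>R b)"
    using z assms by (simp add: sum.union_disjoint)
  then show "z \<in> int_span (B \<union> C)"
    by (rule int_spanI)
qed

lemma int_span_linear_image:
  assumes f: "linear f" "inj_on f B"
  shows "int_span (f ` B) = f ` int_span B"
proof (intro equalityI subsetI)
  fix z assume "z \<in> int_span (f ` B)"
  then obtain c where "z = (\<Sum>b\<in>f ` B. of_int (c b) *\<^sub>R b)"
    by (rule int_spanE)
  also have "\<dots> = f (\<Sum>b\<in>B. of_int (c (f b)) *\<^sub>R b)"
    by (simp add: sum.reindex[OF f(2)] linear_sum[OF f(1)] linear_scale[OF f(1)])
  finally have "z = f (\<Sum>b\<in>B. of_int (c (f b)) *\<^sub>R b)" .
  moreover have "(\<Sum>b\<in>B. of_int (c (f b)) *\<^sub>R b) \<in> int_span B"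
    by (rule int_spanI[OF refl])
  ultimately show "z \<in> f ` int_span B"
    by blast
next
  fix z assume "z \<in> f ` int_span B"
  then obtain c where "z = f (\<Sum>b\<in>B. of_int (c b) *\<^sub>R b)"
    by (auto elim!: int_spanE)
  also have "\<dots> = (\<Sum>b\<in>f ` B. of_int (c (inv_into B f b)) *\<^sub>R b)"
    by (simp add: sum.reindex[OF f(2)] linear_sum[OF f(1)] linear_scale[OF f(1)] inv_into_f_f[OF f(2)])
  finally show "z \<in> int_span (f ` B)"
    by (rule int_spanI)
qed

lemma independent_Times_zero:
  fixes A :: "'a::euclidean_space set" and B :: "'b::euclidean_space set"
  assumes A: "independent A" and B: "independent B"
  shows "independent (A \<times> {0} \<union> {0} \<times> B)"
  unfolding dependent_def
proof safe
  fix a assume "a \<in> A" "(a, 0) \<in> span (A \<times> {0} \<union> {0} \<times> B - {(a, 0)})"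
  moreover have "A \<times> {0} \<union> {0} \<times> B - {(a, 0)} = (A - {a}) \<times> {0} \<union> {0} \<times> B"
    using A \<open>a \<in> A\<close> dependent_zero by force
  ultimately show False
    using A by (auto simp: dependent_def span_Un span_Times_sing1 span_Times_sing2)
next
  fix b assume "b \<in> B" "(0, b) \<in> span (A \<times> {0} \<union> {0} \<times> B - {(0, b)})"
  moreover have "A \<times> {0} \<union> {0} \<times> B - {(0, b)} = A \<times> {0} \<union> {0} \<times> (B - {b})"
    using B \<open>b \<in> B\<close> dependent_zero by force
  ultimately show False
    using B by (auto simp: dependent_def span_Un span_Times_sing1 span_Times_sing2)
qed

lemma zbasis_Times:
  fixes B1 :: "'a::euclidean_space set" and B2 :: "'b::euclidean_space set"
  assumes "zbasis N1 B1" "zbasis N2 B2"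
  shows "zbasis (N1 \<times> N2) (B1 \<times> {0} \<union> {0} \<times> B2)"
proof -
  have B1: "finite B1" "independent B1" "N1 = int_span B1"
    and B2: "finite B2" "independent B2" "N2 = int_span B2"
    using assms unfolding zbasis_def by auto
  have images: "B1 \<times> {0} = (\<lambda>x. (x, 0)) ` B1" "{0} \<times> B2 = Pair 0 ` B2"
    by auto
  have "B1 \<times> {0} \<inter> {0} \<times> B2 = {}"
    using B2(2) dependent_zero by auto
  then have "int_span (B1 \<times> {0} \<union> {0} \<times> B2) =
      {x + y | x y. x \<in> (\<lambda>x. (x, 0)) ` N1 \<and> y \<in> Pair 0 ` N2}"
    using B1 B2 by (simp add: int_span_Un int_span_linear_image linear_Pair_zero inj_on_def images)
  also have "\<dots> = N1 \<times> N2"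
    by force
  finally show ?thesis
    unfolding zbasis_def using B1 B2 independent_Times_zero by auto
qed

lemma is_lattice_Times: "is_lattice N1 \<Longrightarrow> is_lattice N2 \<Longrightarrow> is_lattice (N1 \<times> N2)"
  unfolding is_lattice_def using zbasis_Times by blast

lemma pos_hull_Times:
  fixes G1 :: "'a::real_vector set" and G2 :: "'b::real_vector set"
  assumes "finite G1" "finite G2"
  shows "pos_hull (G1 \<times> {0} \<union> {0} \<times> G2) = pos_hull G1 \<times> pos_hull G2"
proof -
  have "G1 \<times> {0} \<union> {0} \<times> G2 = (\<lambda>x. (x, 0)) ` G1 \<union> Pair 0 ` G2"
    by auto
  then have "pos_hull (G1 \<times> {0} \<union> {0} \<times> G2) =
      (\<Union>x\<in>(\<lambda>x. (x, 0)) ` (convex_cone hull G1). \<Union>y\<in>Pair 0 ` (convex_cone hull G2). {x + y})"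
    using assms
    by (simp add: pos_hull_eq_convex_cone_hull convex_cone_hull_Un convex_cone_hull_linear_image linear_Pair_zero)
  also have "\<dots> = pos_hull G1 \<times> pos_hull G2"
    using assms by (force simp: pos_hull_eq_convex_cone_hull)
  finally show ?thesis .
qed

lemma rat_cone_Times:
  assumes \<sigma>1: "rat_cone N1 \<sigma>1" and \<sigma>2: "rat_cone N2 \<sigma>2" and "0 \<in> N1" "0 \<in> N2"
  shows "rat_cone (N1 \<times> N2) (\<sigma>1 \<times> \<sigma>2)"
proof -
  obtain G1 where G1: "finite G1" "G1 \<subseteq> N1" "\<sigma>1 = pos_hull G1"
    using \<sigma>1 by (rule rat_coneE)
  obtain G2 where G2: "finite G2" "G2 \<subseteq> N2" "\<sigma>2 = pos_hull G2"
    using \<sigma>2 by (rule rat_coneE)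
  have "x = 0" if "x \<in> \<sigma>1 \<times> \<sigma>2" "- x \<in> \<sigma>1 \<times> \<sigma>2" for x
    using that rat_cone_pointed[OF \<sigma>1, of "fst x" "- fst x"] rat_cone_pointed[OF \<sigma>2, of "snd x" "- snd x"]
    by (auto simp: prod_eq_iff)
  then show ?thesis
    unfolding rat_cone_def using G1 G2 assms(3,4) pos_hull_Times[OF G1(1) G2(1)]
    by (intro conjI exI[of _ "G1 \<times> {0} \<union> {0} \<times> G2"]) auto
qed

lemma prod_fanI: "\<sigma>1 \<in> S1 \<Longrightarrow> \<sigma>2 \<in> S2 \<Longrightarrow> \<sigma>1 \<times> \<sigma>2 \<in> prod_fan S1 S2"
  unfolding prod_fan_def by blast

lemma prod_fanE:
  assumes "\<sigma> \<in> prod_fan S1 S2"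
  obtains \<sigma>1 \<sigma>2 where "\<sigma>1 \<in> S1" "\<sigma>2 \<in> S2" "\<sigma> = \<sigma>1 \<times> \<sigma>2"
  using assms unfolding prod_fan_def by blast

lemma is_fan_Times:
  assumes F1: "is_fan N1 S1" and F2: "is_fan N2 S2" and "0 \<in> N1" "0 \<in> N2"
  shows "is_fan (N1 \<times> N2) (prod_fan S1 S2)"
  unfolding is_fan_def
proof (intro conjI ballI allI impI)
  have "prod_fan S1 S2 = (\<lambda>(a, b). a \<times> b) ` (S1 \<times> S2)"
    unfolding prod_fan_def by auto
  then show "finite (prod_fan S1 S2)"
    using F1 F2 unfolding is_fan_def by simp
  show "prod_fan S1 S2 \<noteq> {}"
    using prod_fanI[OF zero_cone_mem_fan[OF F1] zero_cone_mem_fan[OF F2]] by blast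
  fix \<sigma> assume "\<sigma> \<in> prod_fan S1 S2"
  then obtain \<sigma>1 \<sigma>2 where \<sigma>: "\<sigma>1 \<in> S1" "\<sigma>2 \<in> S2" "\<sigma> = \<sigma>1 \<times> \<sigma>2"
    by (rule prod_fanE)
  show "rat_cone (N1 \<times> N2) \<sigma>"
    unfolding \<sigma>(3) using is_fan_cone[OF F1 \<sigma>(1)] is_fan_cone[OF F2 \<sigma>(2)] assms(3,4)
    by (rule rat_cone_Times)
  show "\<tau> \<in> prod_fan S1 S2" if \<tau>: "\<tau> face_of \<sigma> \<and> \<tau> \<noteq> {}" for \<tau>
  proof -
    obtain T1 T2 where "T1 face_of \<sigma>1" "T2 face_of \<sigma>2" "\<tau> = T1 \<times> T2" "T1 \<noteq> {}" "T2 \<noteq> {}"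
      using \<tau> unfolding \<sigma>(3) face_of_Times_decomp by auto
    then show ?thesis
      using is_fan_face[OF F1 \<sigma>(1)] is_fan_face[OF F2 \<sigma>(2)] prod_fanI by metis
  qed
  fix \<tau> assume "\<tau> \<in> prod_fan S1 S2"
  then obtain \<tau>1 \<tau>2 where \<tau>: "\<tau>1 \<in> S1" "\<tau>2 \<in> S2" "\<tau> = \<tau>1 \<times> \<tau>2"
    by (rule prod_fanE)
  have "(\<sigma>1 \<inter> \<tau>1) face_of \<sigma>1" "(\<sigma>2 \<inter> \<tau>2) face_of \<sigma>2" "(\<tau>1 \<inter> \<sigma>1) face_of \<tau>1" "(\<tau>2 \<inter> \<sigma>2) face_of \<tau>2"
    using \<sigma> \<tau> is_fan_inter_face_of[OF F1] is_fan_inter_face_of[OF F2] by auto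
  then show "(\<sigma> \<inter> \<tau>) face_of \<sigma>" "(\<sigma> \<inter> \<tau>) face_of \<tau>"
    unfolding \<sigma>(3) \<tau>(3) Times_Int_Times by (simp_all add: face_of_Times Int_commute)
qed

lemma span_Times_zero:
  fixes A :: "'a::euclidean_space set" and B :: "'b::euclidean_space set"
  assumes "0 \<in> A" "0 \<in> B"
  shows "span (A \<times> B) = span A \<times> span B"
proof
  show "span (A \<times> B) \<subseteq> span A \<times> span B"
    by (rule span_minimal) (auto intro: span_base subspace_Times)
  show "span A \<times> span B \<subseteq> span (A \<times> B)"
  proof clarify
    fix a b assume ab: "a \<in> span A" "b \<in> span B"
    have "(a, 0) \<in> span (A \<times> B)"
      using ab(1) span_mono[of "A \<times> {0}" "A \<times> B"] assms(2) by (auto simp: span_Times_sing2)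
    moreover have "(0, b) \<in> span (A \<times> B)"
      using ab(2) span_mono[of "{0} \<times> B" "A \<times> B"] assms(1) by (auto simp: span_Times_sing1)
    ultimately have "(a, 0) + (0, b) \<in> span (A \<times> B)"
      by (rule span_add)
    then show "(a, b) \<in> span (A \<times> B)"
      by simp
  qed
qed

lemma dim_Times_zero:
  fixes A :: "'a::euclidean_space set" and B :: "'b::euclidean_space set"
  assumes "0 \<in> A" "0 \<in> B"
  shows "dim (A \<times> B) = dim A + dim B"
proof -
  have "dim (A \<times> B) = dim (span A \<times> span B)"
    using dim_span[of "A \<times> B"] span_Times_zero[OF assms] by simp
  also have "\<dots> = dim A + dim B"
    by (simp add: dim_Times)
  finally show ?thesis .
qed

lemma rays_prod_fan:
  fixes N1 :: "'a::euclidean_space set" and N2 :: "'b::euclidean_space set"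
  assumes F1: "is_fan N1 S1" and F2: "is_fan N2 S2"
  shows "\<rho> \<in> rays (prod_fan S1 S2) \<longleftrightarrow>
    (\<exists>\<rho>1\<in>rays S1. \<rho> = \<rho>1 \<times> {0}) \<or> (\<exists>\<rho>2\<in>rays S2. \<rho> = {0} \<times> \<rho>2)"
proof
  assume "\<rho> \<in> rays (prod_fan S1 S2)"
  then obtain \<sigma>1 \<sigma>2 where \<sigma>: "\<sigma>1 \<in> S1" "\<sigma>2 \<in> S2" "\<rho> = \<sigma>1 \<times> \<sigma>2" "dim (\<sigma>1 \<times> \<sigma>2) = 1"
    unfolding rays_def by (auto elim: prod_fanE)
  have z: "0 \<in> \<sigma>1" "0 \<in> \<sigma>2"
    using is_fan_zero_mem[OF F1 \<sigma>(1)] is_fan_zero_mem[OF F2 \<sigma>(2)] .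
  then have "dim \<sigma>1 + dim \<sigma>2 = 1"
    using \<sigma>(4) dim_Times_zero[OF z] by simp
  moreover have "dim \<sigma>1 = 0 \<Longrightarrow> \<sigma>1 = {0}" "dim \<sigma>2 = 0 \<Longrightarrow> \<sigma>2 = {0}"
    using z dim_eq_0 by blast+
  ultimately have "dim \<sigma>1 = 1 \<and> \<sigma>2 = {0} \<or> \<sigma>1 = {0} \<and> dim \<sigma>2 = 1"
    by linarith
  then show "(\<exists>\<rho>1\<in>rays S1. \<rho> = \<rho>1 \<times> {0}) \<or> (\<exists>\<rho>2\<in>rays S2. \<rho> = {0} \<times> \<rho>2)"
    using \<sigma>(1-3) unfolding rays_def by auto
next
  have "dim (\<rho>1 \<times> {0 :: 'b}) = 1" if "\<rho>1 \<in> rays S1" for \<rho>1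
    using that dim_Times_zero[of \<rho>1 "{0}"] is_fan_zero_mem[OF F1] by (simp add: rays_def)
  moreover have "dim ({0 :: 'a} \<times> \<rho>2) = 1" if "\<rho>2 \<in> rays S2" for \<rho>2
    using that dim_Times_zero[of "{0}" \<rho>2] is_fan_zero_mem[OF F2] by (simp add: rays_def)
  ultimately show "(\<exists>\<rho>1\<in>rays S1. \<rho> = \<rho>1 \<times> {0}) \<or> (\<exists>\<rho>2\<in>rays S2. \<rho> = {0} \<times> \<rho>2) \<Longrightarrow>
      \<rho> \<in> rays (prod_fan S1 S2)"
    using zero_cone_mem_fan[OF F1] zero_cone_mem_fan[OF F2] unfolding rays_def
    by (auto intro: prod_fanI)
qed

lemma is_prim_gen_Times_zero:
  "is_prim_gen N1 \<rho>1 u \<Longrightarrow> 0 \<in> N2 \<Longrightarrow> is_prim_gen (N1 \<times> N2) (\<rho>1 \<times> {0}) (u, 0)"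
  unfolding is_prim_gen_def by (force simp: prod_eq_iff)

lemma is_prim_gen_zero_Times:
  "is_prim_gen N2 \<rho>2 u \<Longrightarrow> 0 \<in> N1 \<Longrightarrow> is_prim_gen (N1 \<times> N2) ({0} \<times> \<rho>2) (0, u)"
  unfolding is_prim_gen_def by (force simp: prod_eq_iff)

lemma prim_gen_Times_zero:
  assumes "is_lattice N1" "is_fan N1 S1" "\<rho>1 \<in> rays S1" "0 \<in> N2"
  shows "prim_gen (N1 \<times> N2) (\<rho>1 \<times> {0}) = (prim_gen N1 \<rho>1, 0)"
  using is_prim_gen_prim_gen(1)[OF assms(1) is_fan_cone[OF assms(2) raysD(1)[OF assms(3)]] raysD(2)[OF assms(3)]]
  by (intro prim_gen_eqI is_prim_gen_Times_zero assms(4))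

lemma prim_gen_zero_Times:
  assumes "is_lattice N2" "is_fan N2 S2" "\<rho>2 \<in> rays S2" "0 \<in> N1"
  shows "prim_gen (N1 \<times> N2) ({0} \<times> \<rho>2) = (0, prim_gen N2 \<rho>2)"
  using is_prim_gen_prim_gen(1)[OF assms(1) is_fan_cone[OF assms(2) raysD(1)[OF assms(3)]] raysD(2)[OF assms(3)]]
  by (intro prim_gen_eqI is_prim_gen_zero_Times assms(4))

lemma prim_gen_rays_prod_fan:
  assumes L1: "is_lattice N1" and F1: "is_fan N1 S1" and L2: "is_lattice N2" and F2: "is_fan N2 S2"
    and \<rho>: "\<rho> \<in> rays (prod_fan S1 S2)" "\<rho> \<subseteq> \<sigma>1 \<times> \<sigma>2" and "0 \<in> \<sigma>1" "0 \<in> \<sigma>2"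
  shows "prim_gen (N1 \<times> N2) \<rho> \<in>
    prim_gen N1 ` {\<rho>\<in>rays S1. \<rho> \<subseteq> \<sigma>1} \<times> {0} \<union> {0} \<times> prim_gen N2 ` {\<rho>\<in>rays S2. \<rho> \<subseteq> \<sigma>2}"
proof -
  from \<rho>(1) consider (fst) \<rho>1 where "\<rho>1 \<in> rays S1" "\<rho> = \<rho>1 \<times> {0}"
    | (snd) \<rho>2 where "\<rho>2 \<in> rays S2" "\<rho> = {0} \<times> \<rho>2"
    unfolding rays_prod_fan[OF F1 F2] by blast
  then show ?thesis
  proof cases
    case fst
    then have "\<rho>1 \<subseteq> \<sigma>1"
      using \<rho>(2) by auto
    then show ?thesis
      using fst prim_gen_Times_zero[OF L1 F1 fst(1) lattice_zero[OF L2]] by auto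
  next
    case snd
    then have "\<rho>2 \<subseteq> \<sigma>2"
      using \<rho>(2) by auto
    then show ?thesis
      using snd prim_gen_zero_Times[OF L2 F2 snd(1) lattice_zero[OF L1]] by auto
  qed
qed

lemma unimodular_fan_prod:
  assumes U1: "unimodular_fan N1 S1" and U2: "unimodular_fan N2 S2"
  shows "unimodular_fan (N1 \<times> N2) (prod_fan S1 S2)"
proof -
  have L1: "is_lattice N1" and F1: "is_fan N1 S1" and L2: "is_lattice N2" and F2: "is_fan N2 S2"
    using U1 U2 unfolding unimodular_fan_def by auto
  have "\<exists>B. zbasis (N1 \<times> N2) B \<and> prim_gen (N1 \<times> N2) ` {\<rho>\<in>rays (prod_fan S1 S2). \<rho> \<subseteq> \<sigma>} \<subseteq> B"
    if \<sigma>P: "\<sigma> \<in> prod_fan S1 S2" for \<sigma>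
  proof -
    obtain \<sigma>1 \<sigma>2 where \<sigma>: "\<sigma>1 \<in> S1" "\<sigma>2 \<in> S2" "\<sigma> = \<sigma>1 \<times> \<sigma>2"
      using \<sigma>P by (rule prod_fanE)
    obtain B1 where B1: "zbasis N1 B1" "prim_gen N1 ` {\<rho>\<in>rays S1. \<rho> \<subseteq> \<sigma>1} \<subseteq> B1"
      using U1 \<sigma>(1) unfolding unimodular_fan_def by blast
    obtain B2 where B2: "zbasis N2 B2" "prim_gen N2 ` {\<rho>\<in>rays S2. \<rho> \<subseteq> \<sigma>2} \<subseteq> B2"
      using U2 \<sigma>(2) unfolding unimodular_fan_def by blast
    have "prim_gen (N1 \<times> N2) ` {\<rho>\<in>rays (prod_fan S1 S2). \<rho> \<subseteq> \<sigma>} \<subseteq> B1 \<times> {0} \<union> {0} \<times> B2"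
    proof
      fix p assume "p \<in> prim_gen (N1 \<times> N2) ` {\<rho>\<in>rays (prod_fan S1 S2). \<rho> \<subseteq> \<sigma>}"
      then obtain \<rho> where "\<rho> \<in> rays (prod_fan S1 S2)" "\<rho> \<subseteq> \<sigma>1 \<times> \<sigma>2" "p = prim_gen (N1 \<times> N2) \<rho>"
        using \<sigma>(3) by blast
      then have "p \<in> prim_gen N1 ` {\<rho>\<in>rays S1. \<rho> \<subseteq> \<sigma>1} \<times> {0} \<union> {0} \<times> prim_gen N2 ` {\<rho>\<in>rays S2. \<rho> \<subseteq> \<sigma>2}"
        using prim_gen_rays_prod_fan[OF L1 F1 L2 F2 _ _ is_fan_zero_mem[OF F1 \<sigma>(1)] is_fan_zero_mem[OF F2 \<sigma>(2)]]
        by simp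
      then show "p \<in> B1 \<times> {0} \<union> {0} \<times> B2"
        using B1(2) B2(2) by blast
    qed
    then show ?thesis
      using zbasis_Times[OF B1(1) B2(1)] by blast
  qed
  then show ?thesis
    unfolding unimodular_fan_def
    using is_lattice_Times[OF L1 L2] is_fan_Times[OF F1 F2 lattice_zero[OF L1] lattice_zero[OF L2]] by blast
qed


lemma Union_prod_fan: "\<Union>(prod_fan S1 S2) = \<Union>S1 \<times> \<Union>S2"
  unfolding prod_fan_def by blast

lemma perp_proj_Times:
  fixes A :: "'a::euclidean_space set" and B :: "'b::euclidean_space set"
  assumes "0 \<in> A" "0 \<in> B"
  shows "perp_proj (A \<times> B) z = (perp_proj A (fst z), perp_proj B (snd z))"
proof (rule perp_proj_eqI)
  show "z - (perp_proj A (fst z), perp_proj B (snd z)) \<in> span (A \<times> B)"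
    using perp_proj_spec(1)[of "fst z" A] perp_proj_spec(1)[of "snd z" B]
    by (cases z) (simp add: span_Times_zero[OF assms])
  show "\<forall>a\<in>A \<times> B. a \<bullet> (perp_proj A (fst z), perp_proj B (snd z)) = 0"
    using perp_proj_spec(2)[of A "fst z"] perp_proj_spec(2)[of B "snd z"] by auto
qed

lemma star_lattice_Times:
  fixes A :: "'a::euclidean_space set" and B :: "'b::euclidean_space set"
  assumes "0 \<in> A" "0 \<in> B"
  shows "star_lattice (N1 \<times> N2) (A \<times> B) = star_lattice N1 A \<times> star_lattice N2 B"
  unfolding star_lattice_def perp_proj_Times[OF assms] by force

lemma star_fan_Times:
  assumes F1: "is_fan N1 S1" and F2: "is_fan N2 S2" and \<sigma>: "\<sigma>1 \<in> S1" "\<sigma>2 \<in> S2"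
  shows "star_fan (prod_fan S1 S2) (\<sigma>1 \<times> \<sigma>2) = prod_fan (star_fan S1 \<sigma>1) (star_fan S2 \<sigma>2)"
proof (intro equalityI subsetI)
  have z: "0 \<in> \<sigma>1" "0 \<in> \<sigma>2"
    using is_fan_zero_mem[OF F1 \<sigma>(1)] is_fan_zero_mem[OF F2 \<sigma>(2)] .
  have pp: "perp_proj (\<sigma>1 \<times> \<sigma>2) ` (T1 \<times> T2) = perp_proj \<sigma>1 ` T1 \<times> perp_proj \<sigma>2 ` T2" for T1 T2
    unfolding perp_proj_Times[OF z] by force
  {
    fix C assume "C \<in> star_fan (prod_fan S1 S2) (\<sigma>1 \<times> \<sigma>2)"
    then obtain \<tau> \<tau>' where C: "C = perp_proj (\<sigma>1 \<times> \<sigma>2) ` \<tau>" "\<tau>' \<in> prod_fan S1 S2"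
      "\<sigma>1 \<times> \<sigma>2 \<subseteq> \<tau>'" "\<tau> face_of \<tau>'" "\<tau> \<noteq> {}"
      by (rule star_fan_memE)
    obtain \<tau>1 \<tau>2 where \<tau>': "\<tau>1 \<in> S1" "\<tau>2 \<in> S2" "\<tau>' = \<tau>1 \<times> \<tau>2"
      using C(2) by (rule prod_fanE)
    obtain T1 T2 where T: "T1 face_of \<tau>1" "T2 face_of \<tau>2" "\<tau> = T1 \<times> T2"
      using C(4) \<tau>'(3) face_of_Times_decomp by blast
    have "\<sigma>1 \<subseteq> \<tau>1" "\<sigma>2 \<subseteq> \<tau>2" "T1 \<noteq> {}" "T2 \<noteq> {}"
      using C(3,5) \<tau>'(3) T(3) z by auto
    then have "perp_proj \<sigma>1 ` T1 \<in> star_fan S1 \<sigma>1" "perp_proj \<sigma>2 ` T2 \<in> star_fan S2 \<sigma>2"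
      using \<tau>' T by (auto intro: star_fanI)
    then show "C \<in> prod_fan (star_fan S1 \<sigma>1) (star_fan S2 \<sigma>2)"
      unfolding C(1) T(3) pp by (rule prod_fanI)
  next
    fix C assume "C \<in> prod_fan (star_fan S1 \<sigma>1) (star_fan S2 \<sigma>2)"
    then obtain C1 C2 where C: "C1 \<in> star_fan S1 \<sigma>1" "C2 \<in> star_fan S2 \<sigma>2" "C = C1 \<times> C2"
      by (rule prod_fanE)
    obtain T1 \<tau>1 where 1: "C1 = perp_proj \<sigma>1 ` T1" "\<tau>1 \<in> S1" "\<sigma>1 \<subseteq> \<tau>1" "T1 face_of \<tau>1" "T1 \<noteq> {}"
      using C(1) by (rule star_fan_memE)
    obtain T2 \<tau>2 where 2: "C2 = perp_proj \<sigma>2 ` T2" "\<tau>2 \<in> S2" "\<sigma>2 \<subseteq> \<tau>2" "T2 face_of \<tau>2" "T2 \<noteq> {}"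
      using C(2) by (rule star_fan_memE)
    have "C = perp_proj (\<sigma>1 \<times> \<sigma>2) ` (T1 \<times> T2)"
      unfolding C(3) 1(1) 2(1) pp ..
    moreover have "\<tau>1 \<times> \<tau>2 \<in> prod_fan S1 S2"
      using 1(2) 2(2) by (rule prod_fanI)
    moreover have "(T1 \<times> T2) face_of (\<tau>1 \<times> \<tau>2)"
      using 1(4) 2(4) by (rule face_of_Times)
    moreover have "\<sigma>1 \<times> \<sigma>2 \<subseteq> \<tau>1 \<times> \<tau>2" "T1 \<times> T2 \<noteq> {}"
      using 1(3,5) 2(3,5) by auto
    ultimately show "C \<in> star_fan (prod_fan S1 S2) (\<sigma>1 \<times> \<sigma>2)"
      by (simp add: star_fanI)
  }
qed

lemma intlin_Times:
  assumes "m1 \<in> intlin N1" "m2 \<in> intlin N2"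
  shows "(\<lambda>z. m1 (fst z) + m2 (snd z)) \<in> intlin (N1 \<times> N2)"
proof (rule intlinI)
  have "linear (m1 \<circ> fst)" "linear (m2 \<circ> snd)"
    using linear_compose[OF linear_fst intlinD(1)[OF assms(1)]]
      linear_compose[OF linear_snd intlinD(1)[OF assms(2)]] .
  then show "linear (\<lambda>z. m1 (fst z) + m2 (snd z))"
    using linear_compose_add by (auto simp: o_def)
  fix z assume "z \<in> N1 \<times> N2"
  then show "m1 (fst z) + m2 (snd z) \<in> \<int>"
    using intlinD(2)[OF assms(1)] intlinD(2)[OF assms(2)] by (auto intro: Ints_add)
qed

lemma intlin_Pair_zero:
  assumes "m \<in> intlin (N1 \<times> N2)" "0 \<in> N2"
  shows "(\<lambda>x. m (x, 0)) \<in> intlin N1"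
proof (rule intlinI)
  show "linear (\<lambda>x. m (x, 0))"
    using linear_compose[OF linear_Pair_zero(1) intlinD(1)[OF assms(1)]] by (simp add: o_def)
qed (use assms intlinD(2) in blast)

lemma intlin_zero_Pair:
  assumes "m \<in> intlin (N1 \<times> N2)" "0 \<in> N1"
  shows "(\<lambda>y. m (0, y)) \<in> intlin N2"
proof (rule intlinI)
  show "linear (\<lambda>y. m (0, y))"
    using linear_compose[OF linear_Pair_zero(2) intlinD(1)[OF assms(1)]] by (simp add: o_def)
qed (use assms intlinD(2) in blast)

lemma PL_prod_fan_sum:
  assumes "f1 \<in> PL N1 S1" "f2 \<in> PL N2 S2"
  shows "(\<lambda>z. f1 (fst z) + f2 (snd z)) \<in> PL (N1 \<times> N2) (prod_fan S1 S2)"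
proof (rule PLI)
  fix \<sigma> assume "\<sigma> \<in> prod_fan S1 S2"
  then obtain \<sigma>1 \<sigma>2 where \<sigma>: "\<sigma>1 \<in> S1" "\<sigma>2 \<in> S2" "\<sigma> = \<sigma>1 \<times> \<sigma>2"
    by (rule prod_fanE)
  obtain m1 m2 where "m1 \<in> intlin N1" "\<forall>x\<in>\<sigma>1. f1 x = m1 x" "m2 \<in> intlin N2" "\<forall>x\<in>\<sigma>2. f2 x = m2 x"
    using assms \<sigma>(1,2) by (metis PLE)
  then show "\<exists>m\<in>intlin (N1 \<times> N2). \<forall>z\<in>\<sigma>. f1 (fst z) + f2 (snd z) = m z"
    using \<sigma>(3) by (intro bexI[of _ "\<lambda>z. m1 (fst z) + m2 (snd z)"] intlin_Times) auto
qed

lemma PL_Pair_zero: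
  assumes f: "f \<in> PL (N1 \<times> N2) (prod_fan S1 S2)" and "0 \<in> N2" "is_fan N2 S2"
  shows "(\<lambda>x. f (x, 0)) \<in> PL N1 S1"
proof (rule PLI)
  fix \<sigma>1 assume "\<sigma>1 \<in> S1"
  then have "\<sigma>1 \<times> {0} \<in> prod_fan S1 S2"
    using zero_cone_mem_fan[OF assms(3)] by (rule prod_fanI)
  with f obtain m where "m \<in> intlin (N1 \<times> N2)" "\<forall>z\<in>\<sigma>1 \<times> {0}. f z = m z"
    by (rule PLE)
  then show "\<exists>m\<in>intlin N1. \<forall>x\<in>\<sigma>1. f (x, 0) = m x"
    using intlin_Pair_zero[OF _ assms(2)] by (intro bexI[of _ "\<lambda>x. m (x, 0)"]) auto
qed

lemma PL_zero_Pair: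
  assumes f: "f \<in> PL (N1 \<times> N2) (prod_fan S1 S2)" and "0 \<in> N1" "is_fan N1 S1"
  shows "(\<lambda>y. f (0, y)) \<in> PL N2 S2"
proof (rule PLI)
  fix \<sigma>2 assume "\<sigma>2 \<in> S2"
  with zero_cone_mem_fan[OF assms(3)] have "{0} \<times> \<sigma>2 \<in> prod_fan S1 S2"
    by (rule prod_fanI)
  with f obtain m where "m \<in> intlin (N1 \<times> N2)" "\<forall>z\<in>{0} \<times> \<sigma>2. f z = m z"
    by (rule PLE)
  then show "\<exists>m\<in>intlin N2. \<forall>y\<in>\<sigma>2. f (0, y) = m y"
    using intlin_zero_Pair[OF _ assms(2)] by (intro bexI[of _ "\<lambda>y. m (0, y)"]) auto
qed

lemma PL_prod_fan_split:
  assumes F1: "is_fan N1 S1" and F2: "is_fan N2 S2" and f: "f \<in> PL (N1 \<times> N2) (prod_fan S1 S2)"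
    and z: "z \<in> \<Union>(prod_fan S1 S2)"
  shows "f z = f (fst z, 0) + f (0, snd z)"
proof -
  obtain \<sigma>1 \<sigma>2 where \<sigma>: "\<sigma>1 \<in> S1" "\<sigma>2 \<in> S2" "z \<in> \<sigma>1 \<times> \<sigma>2"
    using z unfolding prod_fan_def by blast
  obtain m where m: "m \<in> intlin (N1 \<times> N2)" "\<forall>z\<in>\<sigma>1 \<times> \<sigma>2. f z = m z"
    using f prod_fanI[OF \<sigma>(1,2)] by (rule PLE)
  have "m z = m (fst z, 0) + m (0, snd z)"
    using linear_add[OF intlinD(1)[OF m(1)], of "(fst z, 0)" "(0, snd z)"] by simp
  moreover have "(fst z, 0) \<in> \<sigma>1 \<times> \<sigma>2" "(0, snd z) \<in> \<sigma>1 \<times> \<sigma>2"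
    using \<sigma> is_fan_zero_mem[OF F1 \<sigma>(1)] is_fan_zero_mem[OF F2 \<sigma>(2)] by auto
  ultimately show ?thesis
    using m(2) \<sigma>(3) by (metis (no_types, lifting))
qed

lemma eq_mod_M_Pair_zero:
  assumes "eq_mod_M (N1 \<times> N2) (prod_fan S1 S2) F G" "0 \<in> N2" "0 \<in> \<Union>S2"
  shows "eq_mod_M N1 S1 (\<lambda>x. F (x, 0)) (\<lambda>x. G (x, 0))"
proof -
  obtain m where "m \<in> intlin (N1 \<times> N2)" "\<forall>z\<in>\<Union>S1 \<times> \<Union>S2. F z = G z + m z"
    using assms(1) unfolding eq_mod_M_def Union_prod_fan by blast
  then show ?thesis
    unfolding eq_mod_M_def using assms(3) intlin_Pair_zero[OF _ assms(2)]
    by (intro bexI[of _ "\<lambda>x. m (x, 0)"]) auto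
qed

lemma eq_mod_M_zero_Pair:
  assumes "eq_mod_M (N1 \<times> N2) (prod_fan S1 S2) F G" "0 \<in> N1" "0 \<in> \<Union>S1"
  shows "eq_mod_M N2 S2 (\<lambda>y. F (0, y)) (\<lambda>y. G (0, y))"
proof -
  obtain m where "m \<in> intlin (N1 \<times> N2)" "\<forall>z\<in>\<Union>S1 \<times> \<Union>S2. F z = G z + m z"
    using assms(1) unfolding eq_mod_M_def Union_prod_fan by blast
  then show ?thesis
    unfolding eq_mod_M_def using assms(3) intlin_zero_Pair[OF _ assms(2)]
    by (intro bexI[of _ "\<lambda>y. m (0, y)"]) auto
qed


lemma courant_prod_fan_fst:
  fixes N1 :: "'a::euclidean_space set" and N2 :: "'b::euclidean_space set"
  assumes U1: "unimodular_fan N1 S1" and U2: "unimodular_fan N2 S2" and \<rho>1: "\<rho>1 \<in> rays S1"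
    and z: "z \<in> \<Union>(prod_fan S1 S2)"
  shows "courant (N1 \<times> N2) (prod_fan S1 S2) (\<rho>1 \<times> {0}) z = courant N1 S1 \<rho>1 (fst z)"
proof -
  have L1: "is_lattice N1" and F1: "is_fan N1 S1" and L2: "is_lattice N2" and F2: "is_fan N2 S2"
    using U1 U2 unfolding unimodular_fan_def by auto
  have \<rho>: "\<rho>1 \<times> {0} \<in> rays (prod_fan S1 S2)"
    using \<rho>1 unfolding rays_prod_fan[OF F1 F2] by blast
  have \<delta>: "(\<lambda>z. courant N1 S1 \<rho>1 (fst z)) \<in> PL (N1 \<times> N2) (prod_fan S1 S2)"
    using PL_prod_fan_sum[OF courant_PL[OF U1 \<rho>1] PL_zero] by simp
  have "courant N1 S1 \<rho>1 (fst (prim_gen (N1 \<times> N2) \<rho>)) = (if \<rho> = \<rho>1 \<times> {0} then 1 else 0)"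
    if \<rho>: "\<rho> \<in> rays (prod_fan S1 S2)" for \<rho>
  proof -
    from \<rho> consider (fst) \<rho>1' where "\<rho>1' \<in> rays S1" "\<rho> = \<rho>1' \<times> {0}"
      | (snd) \<rho>2 where "\<rho>2 \<in> rays S2" "\<rho> = {0} \<times> \<rho>2"
      unfolding rays_prod_fan[OF F1 F2] by blast
    then show ?thesis
    proof cases
      case fst
      then show ?thesis
        using prim_gen_Times_zero[OF L1 F1 fst(1) lattice_zero[OF L2]] courant_prim_gen[OF U1 \<rho>1 fst(1)]
        by (simp add: Times_eq_cancel2)
    next
      case snd
      have "\<rho> \<noteq> \<rho>1 \<times> {0}"
        using prim_gen_ray(1,3)[OF L1 F1 \<rho>1] snd(2) by auto
      then show ?thesis
        using prim_gen_zero_Times[OF L2 F2 snd(1) lattice_zero[OF L1]] snd(2)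
          PL_zero_at_zero[OF F1 courant_PL[OF U1 \<rho>1]] by simp
    qed
  qed
  then show ?thesis
    using courant_eq_on_support[OF unimodular_fan_prod[OF U1 U2] \<rho> \<delta> _ z] by simp
qed

lemma courant_prod_fan_snd:
  fixes N1 :: "'a::euclidean_space set" and N2 :: "'b::euclidean_space set"
  assumes U1: "unimodular_fan N1 S1" and U2: "unimodular_fan N2 S2" and \<rho>2: "\<rho>2 \<in> rays S2"
    and z: "z \<in> \<Union>(prod_fan S1 S2)"
  shows "courant (N1 \<times> N2) (prod_fan S1 S2) ({0} \<times> \<rho>2) z = courant N2 S2 \<rho>2 (snd z)"
proof -
  have L1: "is_lattice N1" and F1: "is_fan N1 S1" and L2: "is_lattice N2" and F2: "is_fan N2 S2"
    using U1 U2 unfolding unimodular_fan_def by auto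
  have \<rho>: "{0} \<times> \<rho>2 \<in> rays (prod_fan S1 S2)"
    using \<rho>2 unfolding rays_prod_fan[OF F1 F2] by blast
  have \<delta>: "(\<lambda>z. courant N2 S2 \<rho>2 (snd z)) \<in> PL (N1 \<times> N2) (prod_fan S1 S2)"
    using PL_prod_fan_sum[OF PL_zero courant_PL[OF U2 \<rho>2]] by simp
  have "courant N2 S2 \<rho>2 (snd (prim_gen (N1 \<times> N2) \<rho>)) = (if \<rho> = {0} \<times> \<rho>2 then 1 else 0)"
    if \<rho>: "\<rho> \<in> rays (prod_fan S1 S2)" for \<rho>
  proof -
    from \<rho> consider (fst) \<rho>1 where "\<rho>1 \<in> rays S1" "\<rho> = \<rho>1 \<times> {0}"
      | (snd) \<rho>2' where "\<rho>2' \<in> rays S2" "\<rho> = {0} \<times> \<rho>2'"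
      unfolding rays_prod_fan[OF F1 F2] by blast
    then show ?thesis
    proof cases
      case fst
      have "\<rho> \<noteq> {0} \<times> \<rho>2"
        using prim_gen_ray(1,3)[OF L2 F2 \<rho>2] fst(2) by auto
      then show ?thesis
        using prim_gen_Times_zero[OF L1 F1 fst(1) lattice_zero[OF L2]] fst(2)
          PL_zero_at_zero[OF F2 courant_PL[OF U2 \<rho>2]] by simp
    next
      case snd
      then show ?thesis
        using prim_gen_zero_Times[OF L2 F2 snd(1) lattice_zero[OF L1]] courant_prim_gen[OF U2 \<rho>2 snd(1)]
        by (simp add: times_eq_iff)
    qed
  qed
  then show ?thesis
    using courant_eq_on_support[OF unimodular_fan_prod[OF U1 U2] \<rho> \<delta> _ z] by simp
qed

lemma lin_on_cone_prod_fan: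
  assumes F1: "is_fan N1 S1" and F2: "is_fan N2 S2" and \<sigma>: "\<sigma>1 \<in> S1" "\<sigma>2 \<in> S2"
    and f: "f \<in> PL (N1 \<times> N2) (prod_fan S1 S2)"
    and f1: "(\<lambda>x. f (x, 0)) \<in> PL N1 S1" and f2: "(\<lambda>y. f (0, y)) \<in> PL N2 S2"
    and a: "a \<in> \<sigma>1 \<times> \<sigma>2"
  shows "lin_on_cone (N1 \<times> N2) (\<sigma>1 \<times> \<sigma>2) f a =
    lin_on_cone N1 \<sigma>1 (\<lambda>x. f (x, 0)) (fst a) + lin_on_cone N2 \<sigma>2 (\<lambda>y. f (0, y)) (snd a)"
proof -
  have "a \<in> \<Union>(prod_fan S1 S2)"
    using a prod_fanI[OF \<sigma>] by blast
  then have "f a = f (fst a, 0) + f (0, snd a)"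
    by (rule PL_prod_fan_split[OF F1 F2 f])
  moreover have "f a = lin_on_cone (N1 \<times> N2) (\<sigma>1 \<times> \<sigma>2) f a"
    using a lin_on_cone_spec(2)[OF f prod_fanI[OF \<sigma>]] by blast
  moreover have "f (fst a, 0) = lin_on_cone N1 \<sigma>1 (\<lambda>x. f (x, 0)) (fst a)"
    using a lin_on_cone_spec(2)[OF f1 \<sigma>(1)] by auto
  moreover have "f (0, snd a) = lin_on_cone N2 \<sigma>2 (\<lambda>y. f (0, y)) (snd a)"
    using a lin_on_cone_spec(2)[OF f2 \<sigma>(2)] by auto
  ultimately show ?thesis
    by simp
qed

lemma star_fun_prod_fan_perp_proj:
  fixes N1 :: "'a::euclidean_space set" and N2 :: "'b::euclidean_space set"
  assumes F1: "is_fan N1 S1" and F2: "is_fan N2 S2" and z: "0 \<in> N1" "0 \<in> N2"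
    and \<sigma>: "\<sigma>1 \<in> S1" "\<sigma>2 \<in> S2" and f: "f \<in> PL (N1 \<times> N2) (prod_fan S1 S2)"
    and x1: "\<tau>1 \<in> S1" "\<sigma>1 \<subseteq> \<tau>1" "x1 \<in> \<tau>1" and x2: "\<tau>2 \<in> S2" "\<sigma>2 \<subseteq> \<tau>2" "x2 \<in> \<tau>2"
  shows "star_fun (N1 \<times> N2) (prod_fan S1 S2) (\<sigma>1 \<times> \<sigma>2) f (perp_proj \<sigma>1 x1, perp_proj \<sigma>2 x2) =
    star_fun N1 S1 \<sigma>1 (\<lambda>x. f (x, 0)) (perp_proj \<sigma>1 x1) + star_fun N2 S2 \<sigma>2 (\<lambda>y. f (0, y)) (perp_proj \<sigma>2 x2)
    + (lin_on_cone N1 \<sigma>1 (\<lambda>x. f (x, 0)) x1 + lin_on_cone N2 \<sigma>2 (\<lambda>y. f (0, y)) x2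
       - lin_on_cone (N1 \<times> N2) (\<sigma>1 \<times> \<sigma>2) f (x1, x2))"
proof -
  have x: "(perp_proj \<sigma>1 x1, perp_proj \<sigma>2 x2) = perp_proj (\<sigma>1 \<times> \<sigma>2) (x1, x2)"
    using perp_proj_Times[OF is_fan_zero_mem[OF F1 \<sigma>(1)] is_fan_zero_mem[OF F2 \<sigma>(2)]] by simp
  have "(x1, x2) \<in> \<Union>(prod_fan S1 S2)"
    using prod_fanI[OF x1(1) x2(1)] x1(3) x2(3) by blast
  then have "f (x1, x2) = f (x1, 0) + f (0, x2)"
    using PL_prod_fan_split[OF F1 F2 f] by simp
  moreover have "star_fun (N1 \<times> N2) (prod_fan S1 S2) (\<sigma>1 \<times> \<sigma>2) f (perp_proj (\<sigma>1 \<times> \<sigma>2) (x1, x2)) =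
      f (x1, x2) - lin_on_cone (N1 \<times> N2) (\<sigma>1 \<times> \<sigma>2) f (x1, x2)"
    using x1 x2 by (intro star_fun_perp_proj[OF is_fan_Times[OF F1 F2 z] f prod_fanI[OF \<sigma>] prod_fanI]) auto
  ultimately show ?thesis
    unfolding x using star_fun_perp_proj[OF F1 PL_Pair_zero[OF f z(2) F2] \<sigma>(1) x1]
      star_fun_perp_proj[OF F2 PL_zero_Pair[OF f z(1) F1] \<sigma>(2) x2] by simp
qed

lemma star_fun_prod_fan:
  fixes N1 :: "'a::euclidean_space set" and N2 :: "'b::euclidean_space set"
  assumes F1: "is_fan N1 S1" and F2: "is_fan N2 S2" and z: "0 \<in> N1" "0 \<in> N2"
    and \<sigma>: "\<sigma>1 \<in> S1" "\<sigma>2 \<in> S2" and f: "f \<in> PL (N1 \<times> N2) (prod_fan S1 S2)"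
  shows "eq_mod_M (star_lattice N1 \<sigma>1 \<times> star_lattice N2 \<sigma>2) (prod_fan (star_fan S1 \<sigma>1) (star_fan S2 \<sigma>2))
    (star_fun (N1 \<times> N2) (prod_fan S1 S2) (\<sigma>1 \<times> \<sigma>2) f)
    (\<lambda>y. star_fun N1 S1 \<sigma>1 (\<lambda>x. f (x, 0)) (fst y) + star_fun N2 S2 \<sigma>2 (\<lambda>x. f (0, x)) (snd y))"
proof -
  let ?f1 = "\<lambda>x. f (x, 0)" and ?f2 = "\<lambda>x. f (0, x)"
  have f1: "?f1 \<in> PL N1 S1" and f2: "?f2 \<in> PL N2 S2"
    using PL_Pair_zero[OF f z(2) F2] PL_zero_Pair[OF f z(1) F1] .
  have z\<sigma>: "0 \<in> \<sigma>1" "0 \<in> \<sigma>2"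
    using is_fan_zero_mem[OF F1 \<sigma>(1)] is_fan_zero_mem[OF F2 \<sigma>(2)] .
  define h where "h y = lin_on_cone N1 \<sigma>1 ?f1 (fst y) + lin_on_cone N2 \<sigma>2 ?f2 (snd y)
    - lin_on_cone (N1 \<times> N2) (\<sigma>1 \<times> \<sigma>2) f y" for y
  have h: "h \<in> intlin (N1 \<times> N2)"
    unfolding h_def using lin_on_cone_spec(1)[OF f1 \<sigma>(1)] lin_on_cone_spec(1)[OF f2 \<sigma>(2)]
      lin_on_cone_spec(1)[OF f prod_fanI[OF \<sigma>]]
    by (intro intlin_diff intlin_Times)
  have h0: "\<forall>a\<in>\<sigma>1 \<times> \<sigma>2. h a = 0"
    unfolding h_def using lin_on_cone_prod_fan[OF F1 F2 \<sigma> f f1 f2] by simp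
  have "star_fun (N1 \<times> N2) (prod_fan S1 S2) (\<sigma>1 \<times> \<sigma>2) f y =
      star_fun N1 S1 \<sigma>1 ?f1 (fst y) + star_fun N2 S2 \<sigma>2 ?f2 (snd y) + h y"
    if y: "y \<in> \<Union>(prod_fan (star_fan S1 \<sigma>1) (star_fan S2 \<sigma>2))" for y
  proof -
    have "fst y \<in> \<Union>(star_fan S1 \<sigma>1)" "snd y \<in> \<Union>(star_fan S2 \<sigma>2)"
      using y unfolding Union_prod_fan by auto
    obtain \<tau>1 x1 where 1: "\<tau>1 \<in> S1" "\<sigma>1 \<subseteq> \<tau>1" "x1 \<in> \<tau>1" "fst y = perp_proj \<sigma>1 x1"
      using \<open>fst y \<in> \<Union>(star_fan S1 \<sigma>1)\<close> by (rule star_fan_supportE)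
    obtain \<tau>2 x2 where 2: "\<tau>2 \<in> S2" "\<sigma>2 \<subseteq> \<tau>2" "x2 \<in> \<tau>2" "snd y = perp_proj \<sigma>2 x2"
      using \<open>snd y \<in> \<Union>(star_fan S2 \<sigma>2)\<close> by (rule star_fan_supportE)
    have y_eq: "y = (perp_proj \<sigma>1 x1, perp_proj \<sigma>2 x2)"
      using 1(4) 2(4) by (simp add: prod_eq_iff)
    have "h (x1, x2) = h y"
      unfolding y_eq using linear_perp_proj[OF intlinD(1)[OF h] h0, of "(x1, x2)"] perp_proj_Times[OF z\<sigma>]
      by simp
    then show ?thesis
      using star_fun_prod_fan_perp_proj[OF F1 F2 z \<sigma> f 1(1-3) 2(1-3)] y_eq unfolding h_def by simp
  qed
  moreover have "h \<in> intlin (star_lattice N1 \<sigma>1 \<times> star_lattice N2 \<sigma>2)"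
    using intlin_star_lattice[OF h h0] star_lattice_Times[OF z\<sigma>] by simp
  ultimately show ?thesis
    unfolding eq_mod_M_def by (intro bexI[of _ h]) auto
qed


section \<open>The product formula\<close>

definition prod_chi ::
    "(('a::euclidean_space \<Rightarrow> real) \<Rightarrow> int) \<Rightarrow> (('b::euclidean_space \<Rightarrow> real) \<Rightarrow> int) \<Rightarrow> ('a \<times> 'b \<Rightarrow> real) \<Rightarrow> int"
  where "prod_chi c1 c2 f = c1 (\<lambda>x. f (x, 0)) * c2 (\<lambda>y. f (0, y))"

lemma prod_chi_eq_mod_M:
  assumes E1: "ehr_chi N1 S1 c1" and E2: "ehr_chi N2 S2 c2"
    and F: "F \<in> PL (N1 \<times> N2) (prod_fan S1 S2)" and G: "G \<in> PL (N1 \<times> N2) (prod_fan S1 S2)"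
    and FG: "eq_mod_M (N1 \<times> N2) (prod_fan S1 S2) F G"
  shows "prod_chi c1 c2 F = prod_chi c1 c2 G"
proof -
  have L1: "is_lattice N1" and F1: "is_fan N1 S1" and L2: "is_lattice N2" and F2: "is_fan N2 S2"
    using ehr_chi_unimodular[OF E1] ehr_chi_unimodular[OF E2] unfolding unimodular_fan_def by auto
  have z: "0 \<in> N1" "0 \<in> N2" "0 \<in> \<Union>S1" "0 \<in> \<Union>S2"
    using lattice_zero[OF L1] lattice_zero[OF L2] zero_cone_mem_fan[OF F1] zero_cone_mem_fan[OF F2] by auto
  have "c1 (\<lambda>x. F (x, 0)) = c1 (\<lambda>x. G (x, 0))"
    using PL_Pair_zero[OF F z(2) F2] PL_Pair_zero[OF G z(2) F2] eq_mod_M_Pair_zero[OF FG z(2,4)]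
    by (rule ehr_chi_eq_mod_M[OF E1])
  moreover have "c2 (\<lambda>y. F (0, y)) = c2 (\<lambda>y. G (0, y))"
    using PL_zero_Pair[OF F z(1) F1] PL_zero_Pair[OF G z(1) F1] eq_mod_M_zero_Pair[OF FG z(1,3)]
    by (rule ehr_chi_eq_mod_M[OF E2])
  ultimately show ?thesis
    unfolding prod_chi_def by simp
qed

lemma prod_chi_sum:
  assumes "is_fan N1 S1" "is_fan N2 S2" "f1 \<in> PL N1 S1" "f2 \<in> PL N2 S2"
  shows "prod_chi c1 c2 (\<lambda>z. f1 (fst z) + f2 (snd z)) = c1 f1 * c2 f2"
  unfolding prod_chi_def using PL_zero_at_zero[OF assms(1,3)] PL_zero_at_zero[OF assms(2,4)] by simp

lemma prod_chi_star_fun: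
  assumes U1: "unimodular_fan N1 S1" and U2: "unimodular_fan N2 S2" and \<sigma>: "\<sigma>1 \<in> S1" "\<sigma>2 \<in> S2"
    and E1: "ehr_chi (star_lattice N1 \<sigma>1) (star_fan S1 \<sigma>1) c1"
    and E2: "ehr_chi (star_lattice N2 \<sigma>2) (star_fan S2 \<sigma>2) c2"
    and f: "f \<in> PL (N1 \<times> N2) (prod_fan S1 S2)"
  shows "prod_chi c1 c2 (star_fun (N1 \<times> N2) (prod_fan S1 S2) (\<sigma>1 \<times> \<sigma>2) f) =
    c1 (star_fun N1 S1 \<sigma>1 (\<lambda>x. f (x, 0))) * c2 (star_fun N2 S2 \<sigma>2 (\<lambda>y. f (0, y)))"
proof -
  have L1: "is_lattice N1" and F1: "is_fan N1 S1" and L2: "is_lattice N2" and F2: "is_fan N2 S2"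
    using U1 U2 unfolding unimodular_fan_def by auto
  have z: "0 \<in> N1" "0 \<in> N2" "0 \<in> \<sigma>1" "0 \<in> \<sigma>2"
    using lattice_zero[OF L1] lattice_zero[OF L2] is_fan_zero_mem[OF F1 \<sigma>(1)] is_fan_zero_mem[OF F2 \<sigma>(2)] .
  have FS1: "is_fan (star_lattice N1 \<sigma>1) (star_fan S1 \<sigma>1)" and FS2: "is_fan (star_lattice N2 \<sigma>2) (star_fan S2 \<sigma>2)"
    using ehr_chi_unimodular[OF E1] ehr_chi_unimodular[OF E2] unfolding unimodular_fan_def by auto
  have sf1: "star_fun N1 S1 \<sigma>1 (\<lambda>x. f (x, 0)) \<in> PL (star_lattice N1 \<sigma>1) (star_fan S1 \<sigma>1)"
    using star_fun_PL[OF F1 PL_Pair_zero[OF f z(2) F2] \<sigma>(1)] .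
  have sf2: "star_fun N2 S2 \<sigma>2 (\<lambda>y. f (0, y)) \<in> PL (star_lattice N2 \<sigma>2) (star_fan S2 \<sigma>2)"
    using star_fun_PL[OF F2 PL_zero_Pair[OF f z(1) F1] \<sigma>(2)] .
  have "star_fun (N1 \<times> N2) (prod_fan S1 S2) (\<sigma>1 \<times> \<sigma>2) f \<in>
      PL (star_lattice N1 \<sigma>1 \<times> star_lattice N2 \<sigma>2) (prod_fan (star_fan S1 \<sigma>1) (star_fan S2 \<sigma>2))"
    using star_fun_PL[OF is_fan_Times[OF F1 F2 z(1,2)] f prod_fanI[OF \<sigma>]]
    by (simp add: star_lattice_Times[OF z(3,4)] star_fan_Times[OF F1 F2 \<sigma>])
  then show ?thesis
    using prod_chi_eq_mod_M[OF E1 E2 _ PL_prod_fan_sum[OF sf1 sf2] star_fun_prod_fan[OF F1 F2 z(1,2) \<sigma> f]]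
      prod_chi_sum[OF FS1 FS2 sf1 sf2] by simp
qed

lemma prod_chi_recursion_fst:
  assumes E1: "ehr_chi N1 S1 c1" and E2: "ehr_chi N2 S2 c2" and \<rho>1: "\<rho>1 \<in> rays S1"
    and E1': "ehr_chi (star_lattice N1 \<rho>1) (star_fan S1 \<rho>1) c1'"
    and rec: "\<forall>g\<in>PL N1 S1. c1 g = c1 (\<lambda>x. g x - courant N1 S1 \<rho>1 x) + c1' (star_fun N1 S1 \<rho>1 g)"
    and f: "f \<in> PL (N1 \<times> N2) (prod_fan S1 S2)"
  shows "prod_chi c1 c2 f =
    prod_chi c1 c2 (\<lambda>z. f z - courant (N1 \<times> N2) (prod_fan S1 S2) (\<rho>1 \<times> {0}) z) +
    prod_chi c1' c2 (star_fun (N1 \<times> N2) (prod_fan S1 S2) (\<rho>1 \<times> {0}) f)"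
proof -
  have U1: "unimodular_fan N1 S1" and U2: "unimodular_fan N2 S2"
    using ehr_chi_unimodular[OF E1] ehr_chi_unimodular[OF E2] .
  then have L1: "is_lattice N1" and F1: "is_fan N1 S1" and L2: "is_lattice N2" and F2: "is_fan N2 S2"
    unfolding unimodular_fan_def by auto
  let ?\<delta> = "courant (N1 \<times> N2) (prod_fan S1 S2) (\<rho>1 \<times> {0})" and ?\<delta>1 = "courant N1 S1 \<rho>1"
  let ?f1 = "\<lambda>x. f (x, 0)" and ?f2 = "\<lambda>y. f (0, y)"
  have f1: "?f1 \<in> PL N1 S1" and f2: "?f2 \<in> PL N2 S2"
    using PL_Pair_zero[OF f lattice_zero[OF L2] F2] PL_zero_Pair[OF f lattice_zero[OF L1] F1] .
  have f1\<delta>: "(\<lambda>x. ?f1 x - ?\<delta>1 x) \<in> PL N1 S1"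
    using f1 courant_PL[OF U1 \<rho>1] by (rule PL_diff)
  have "?\<delta> \<in> PL (N1 \<times> N2) (prod_fan S1 S2)"
    using \<rho>1 rays_prod_fan[OF F1 F2] by (blast intro: courant_PL unimodular_fan_prod[OF U1 U2])
  moreover have "f z - ?\<delta> z = (?f1 (fst z) - ?\<delta>1 (fst z)) + ?f2 (snd z)" if "z \<in> \<Union>(prod_fan S1 S2)" for z
    using PL_prod_fan_split[OF F1 F2 f that] courant_prod_fan_fst[OF U1 U2 \<rho>1 that] by simp
  ultimately have "prod_chi c1 c2 (\<lambda>z. f z - ?\<delta> z) = c1 (\<lambda>x. ?f1 x - ?\<delta>1 x) * c2 ?f2"
    using prod_chi_eq_mod_M[OF E1 E2 PL_diff[OF f] PL_prod_fan_sum[OF f1\<delta> f2] eq_mod_M_if_eq_on_support]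
      prod_chi_sum[OF F1 F2 f1\<delta> f2] by simp
  moreover have "c2 (star_fun N2 S2 {0} ?f2) = c2 ?f2"
    using ehr_chi_eq_mod_M[OF E2 _ f2 star_fun_zero_cone_eq_mod_M[OF F2 f2]]
      star_fun_PL[OF F2 f2 zero_cone_mem_fan[OF F2]]
    by (simp add: star_lattice_zero_cone star_fan_zero_cone[OF F2])
  then have "prod_chi c1' c2 (star_fun (N1 \<times> N2) (prod_fan S1 S2) (\<rho>1 \<times> {0}) f) =
      c1' (star_fun N1 S1 \<rho>1 ?f1) * c2 ?f2"
    using prod_chi_star_fun[OF U1 U2 raysD(1)[OF \<rho>1] zero_cone_mem_fan[OF F2] E1' _ f] E2
    by (simp add: star_lattice_zero_cone star_fan_zero_cone[OF F2])
  moreover have "c1 ?f1 = c1 (\<lambda>x. ?f1 x - ?\<delta>1 x) + c1' (star_fun N1 S1 \<rho>1 ?f1)"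
    using rec f1 by blast
  ultimately show ?thesis
    unfolding prod_chi_def[of c1 c2 f] by (simp add: distrib_right)
qed

lemma prod_chi_recursion_snd:
  assumes E1: "ehr_chi N1 S1 c1" and E2: "ehr_chi N2 S2 c2" and \<rho>2: "\<rho>2 \<in> rays S2"
    and E2': "ehr_chi (star_lattice N2 \<rho>2) (star_fan S2 \<rho>2) c2'"
    and rec: "\<forall>g\<in>PL N2 S2. c2 g = c2 (\<lambda>y. g y - courant N2 S2 \<rho>2 y) + c2' (star_fun N2 S2 \<rho>2 g)"
    and f: "f \<in> PL (N1 \<times> N2) (prod_fan S1 S2)"
  shows "prod_chi c1 c2 f =
    prod_chi c1 c2 (\<lambda>z. f z - courant (N1 \<times> N2) (prod_fan S1 S2) ({0} \<times> \<rho>2) z) +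
    prod_chi c1 c2' (star_fun (N1 \<times> N2) (prod_fan S1 S2) ({0} \<times> \<rho>2) f)"
proof -
  have U1: "unimodular_fan N1 S1" and U2: "unimodular_fan N2 S2"
    using ehr_chi_unimodular[OF E1] ehr_chi_unimodular[OF E2] .
  then have L1: "is_lattice N1" and F1: "is_fan N1 S1" and L2: "is_lattice N2" and F2: "is_fan N2 S2"
    unfolding unimodular_fan_def by auto
  let ?\<delta> = "courant (N1 \<times> N2) (prod_fan S1 S2) ({0} \<times> \<rho>2)" and ?\<delta>2 = "courant N2 S2 \<rho>2"
  let ?f1 = "\<lambda>x. f (x, 0)" and ?f2 = "\<lambda>y. f (0, y)"
  have f1: "?f1 \<in> PL N1 S1" and f2: "?f2 \<in> PL N2 S2"
    using PL_Pair_zero[OF f lattice_zero[OF L2] F2] PL_zero_Pair[OF f lattice_zero[OF L1] F1] .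
  have f2\<delta>: "(\<lambda>y. ?f2 y - ?\<delta>2 y) \<in> PL N2 S2"
    using f2 courant_PL[OF U2 \<rho>2] by (rule PL_diff)
  have "?\<delta> \<in> PL (N1 \<times> N2) (prod_fan S1 S2)"
    using \<rho>2 rays_prod_fan[OF F1 F2] by (blast intro: courant_PL unimodular_fan_prod[OF U1 U2])
  moreover have "f z - ?\<delta> z = ?f1 (fst z) + (?f2 (snd z) - ?\<delta>2 (snd z))" if "z \<in> \<Union>(prod_fan S1 S2)" for z
    using PL_prod_fan_split[OF F1 F2 f that] courant_prod_fan_snd[OF U1 U2 \<rho>2 that] by simp
  ultimately have "prod_chi c1 c2 (\<lambda>z. f z - ?\<delta> z) = c1 ?f1 * c2 (\<lambda>y. ?f2 y - ?\<delta>2 y)"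
    using prod_chi_eq_mod_M[OF E1 E2 PL_diff[OF f] PL_prod_fan_sum[OF f1 f2\<delta>] eq_mod_M_if_eq_on_support]
      prod_chi_sum[OF F1 F2 f1 f2\<delta>] by simp
  moreover have "c1 (star_fun N1 S1 {0} ?f1) = c1 ?f1"
    using ehr_chi_eq_mod_M[OF E1 _ f1 star_fun_zero_cone_eq_mod_M[OF F1 f1]]
      star_fun_PL[OF F1 f1 zero_cone_mem_fan[OF F1]]
    by (simp add: star_lattice_zero_cone star_fan_zero_cone[OF F1])
  then have "prod_chi c1 c2' (star_fun (N1 \<times> N2) (prod_fan S1 S2) ({0} \<times> \<rho>2) f) =
      c1 ?f1 * c2' (star_fun N2 S2 \<rho>2 ?f2)"
    using prod_chi_star_fun[OF U1 U2 zero_cone_mem_fan[OF F1] raysD(1)[OF \<rho>2] _ E2' f] E1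
    by (simp add: star_lattice_zero_cone star_fan_zero_cone[OF F1])
  moreover have "c2 ?f2 = c2 (\<lambda>y. ?f2 y - ?\<delta>2 y) + c2' (star_fun N2 S2 \<rho>2 ?f2)"
    using rec f2 by blast
  ultimately show ?thesis
    unfolding prod_chi_def[of c1 c2 f] by (simp add: distrib_left)
qed

lemma prod_chi_recursion:
  assumes E1: "ehr_chi N1 S1 c1" and E2: "ehr_chi N2 S2 c2"
    and IH1: "\<And>\<rho>1. \<rho>1 \<in> rays S1 \<Longrightarrow> \<exists>c1'. ehr_chi (star_lattice N1 \<rho>1) (star_fan S1 \<rho>1) c1' \<and>
        ehr_chi (star_lattice N1 \<rho>1 \<times> N2) (prod_fan (star_fan S1 \<rho>1) S2) (prod_chi c1' c2) \<and>
        (\<forall>g\<in>PL N1 S1. c1 g = c1 (\<lambda>x. g x - courant N1 S1 \<rho>1 x) + c1' (star_fun N1 S1 \<rho>1 g))"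
    and IH2: "\<And>\<rho>2. \<rho>2 \<in> rays S2 \<Longrightarrow> \<exists>c2'. ehr_chi (star_lattice N2 \<rho>2) (star_fan S2 \<rho>2) c2' \<and>
        ehr_chi (N1 \<times> star_lattice N2 \<rho>2) (prod_fan S1 (star_fan S2 \<rho>2)) (prod_chi c1 c2') \<and>
        (\<forall>g\<in>PL N2 S2. c2 g = c2 (\<lambda>y. g y - courant N2 S2 \<rho>2 y) + c2' (star_fun N2 S2 \<rho>2 g))"
    and \<rho>: "\<rho> \<in> rays (prod_fan S1 S2)"
  shows "\<exists>c. ehr_chi (star_lattice (N1 \<times> N2) \<rho>) (star_fan (prod_fan S1 S2) \<rho>) c \<and>
    (\<forall>f\<in>PL (N1 \<times> N2) (prod_fan S1 S2). prod_chi c1 c2 f =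
      prod_chi c1 c2 (\<lambda>z. f z - courant (N1 \<times> N2) (prod_fan S1 S2) \<rho> z) +
      c (star_fun (N1 \<times> N2) (prod_fan S1 S2) \<rho> f))"
proof -
  have F1: "is_fan N1 S1" and F2: "is_fan N2 S2"
    using ehr_chi_unimodular[OF E1] ehr_chi_unimodular[OF E2] unfolding unimodular_fan_def by auto
  from \<rho> consider (fst) \<rho>1 where "\<rho>1 \<in> rays S1" "\<rho> = \<rho>1 \<times> {0}"
    | (snd) \<rho>2 where "\<rho>2 \<in> rays S2" "\<rho> = {0} \<times> \<rho>2"
    unfolding rays_prod_fan[OF F1 F2] by blast
  then show ?thesis
  proof cases
    case fst
    obtain c1' where c1': "ehr_chi (star_lattice N1 \<rho>1) (star_fan S1 \<rho>1) c1'"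
      "ehr_chi (star_lattice N1 \<rho>1 \<times> N2) (prod_fan (star_fan S1 \<rho>1) S2) (prod_chi c1' c2)"
      "\<forall>g\<in>PL N1 S1. c1 g = c1 (\<lambda>x. g x - courant N1 S1 \<rho>1 x) + c1' (star_fun N1 S1 \<rho>1 g)"
      using IH1[OF fst(1)] by blast
    have "star_lattice (N1 \<times> N2) \<rho> = star_lattice N1 \<rho>1 \<times> N2"
      "star_fan (prod_fan S1 S2) \<rho> = prod_fan (star_fan S1 \<rho>1) S2"
      using fst star_lattice_Times[of \<rho>1 "{0}" N1 N2] star_fan_Times[OF F1 F2 raysD(1) zero_cone_mem_fan[OF F2]]
        is_fan_zero_mem[OF F1 raysD(1)[OF fst(1)]] by (simp_all add: star_lattice_zero_cone star_fan_zero_cone[OF F2])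
    then show ?thesis
      using c1' prod_chi_recursion_fst[OF E1 E2 fst(1) c1'(1,3)] fst(2) by auto
  next
    case snd
    obtain c2' where c2': "ehr_chi (star_lattice N2 \<rho>2) (star_fan S2 \<rho>2) c2'"
      "ehr_chi (N1 \<times> star_lattice N2 \<rho>2) (prod_fan S1 (star_fan S2 \<rho>2)) (prod_chi c1 c2')"
      "\<forall>g\<in>PL N2 S2. c2 g = c2 (\<lambda>y. g y - courant N2 S2 \<rho>2 y) + c2' (star_fun N2 S2 \<rho>2 g)"
      using IH2[OF snd(1)] by blast
    have "star_lattice (N1 \<times> N2) \<rho> = N1 \<times> star_lattice N2 \<rho>2"
      "star_fan (prod_fan S1 S2) \<rho> = prod_fan S1 (star_fan S2 \<rho>2)"
      using snd star_lattice_Times[of "{0}" \<rho>2 N1 N2] star_fan_Times[OF F1 F2 zero_cone_mem_fan[OF F1] raysD(1)]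
        is_fan_zero_mem[OF F2 raysD(1)[OF snd(1)]] by (simp_all add: star_lattice_zero_cone star_fan_zero_cone[OF F1])
    then show ?thesis
      using c2' prod_chi_recursion_snd[OF E1 E2 snd(1) c2'(1,3)] snd(2) by auto
  qed
qed

lemma ehr_chi_prod_fan:
  assumes "ehr_chi N1 S1 c1" "ehr_chi N2 S2 c2"
  shows "ehr_chi (N1 \<times> N2) (prod_fan S1 S2) (prod_chi c1 c2)"
  using assms
proof (induction arbitrary: N2 S2 c2 rule: ehr_chi.induct)
  case (1 N1 S1 c1)
  note outer = this
  have E1: "ehr_chi N1 S1 c1"
    using outer(1-4) by (intro ehr_chi.intros) blast+
  from outer(5) show ?case
  proof (induction rule: ehr_chi.induct)
    case (1 N2 S2 c2)
    have E2: "ehr_chi N2 S2 c2"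
      using 1(1-4) by (intro ehr_chi.intros) blast+
    show ?case
    proof (rule ehr_chi.intros)
      show "unimodular_fan (N1 \<times> N2) (prod_fan S1 S2)"
        using outer(1) 1(1) by (rule unimodular_fan_prod)
      show "\<forall>f\<in>PL (N1 \<times> N2) (prod_fan S1 S2). \<forall>g\<in>PL (N1 \<times> N2) (prod_fan S1 S2).
          (\<exists>m\<in>intlin (N1 \<times> N2). \<forall>x\<in>\<Union>(prod_fan S1 S2). f x = g x + m x) \<longrightarrow>
          prod_chi c1 c2 f = prod_chi c1 c2 g"
        using prod_chi_eq_mod_M[OF E1 E2] unfolding eq_mod_M_def by blast
      show "prod_chi c1 c2 (\<lambda>x. 0) = 1"
        unfolding prod_chi_def using outer(3) 1(3) by simp
      show "\<forall>\<rho>\<in>rays (prod_fan S1 S2). \<exists>c. ehr_chi (star_lattice (N1 \<times> N2) \<rho>) (star_fan (prod_fan S1 S2) \<rho>) c \<and>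
          (\<forall>f\<in>PL (N1 \<times> N2) (prod_fan S1 S2). prod_chi c1 c2 f =
            prod_chi c1 c2 (\<lambda>x. f x - courant (N1 \<times> N2) (prod_fan S1 S2) \<rho> x) +
            c (star_fun (N1 \<times> N2) (prod_fan S1 S2) \<rho> f))"
        using prod_chi_recursion[OF E1 E2] outer(4) 1(4) E2 by blast
    qed
  qed
qed

theorem proposition5:
  fixes N1 :: "'a::euclidean_space set" and S1 :: "'a set set"
    and N2 :: "'b::euclidean_space set" and S2 :: "'b set set"
    and chi1 :: "('a \<Rightarrow> real) \<Rightarrow> int" and chi2 :: "('b \<Rightarrow> real) \<Rightarrow> int"
  assumes "ehr_chi N1 S1 chi1" and "ehr_chi N2 S2 chi2"
  shows "ehrhart (N1 \<times> N2) (prod_fan S1 S2) \<and>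
    (\<forall>chi. ehr_chi (N1 \<times> N2) (prod_fan S1 S2) chi \<longrightarrow>
       (\<forall>f1\<in>PL N1 S1. \<forall>f2\<in>PL N2 S2. chi (\<lambda>(x, y). f1 x + f2 y) = chi1 f1 * chi2 f2))"
proof -
  have E: "ehr_chi (N1 \<times> N2) (prod_fan S1 S2) (prod_chi chi1 chi2)"
    using assms by (rule ehr_chi_prod_fan)
  have F1: "is_fan N1 S1" and F2: "is_fan N2 S2"
    using ehr_chi_unimodular[OF assms(1)] ehr_chi_unimodular[OF assms(2)] unfolding unimodular_fan_def by auto
  have "chi (\<lambda>z. f1 (fst z) + f2 (snd z)) = chi1 f1 * chi2 f2"
    if "ehr_chi (N1 \<times> N2) (prod_fan S1 S2) chi" "f1 \<in> PL N1 S1" "f2 \<in> PL N2 S2" for chi f1 f2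
    using ehr_chi_unique[OF that(1) E PL_prod_fan_sum[OF that(2,3)]] prod_chi_sum[OF F1 F2 that(2,3)] by simp
  then show ?thesis
    using E unfolding ehrhart_def by (auto simp: case_prod_unfold)
qed

end
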